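(* Let $\mathbf{M}$ be a compact smooth submanifold without boundary of $\mathbf{R}^s$ with cutlocus $\mathbf{C}$ and nearest-point mapping $\pi:\mathbf{R}^s\setminus\mathbf{C}\to\mathbf{M}$. For every $t\notin\mathbf{C}$, $$\|\pi'(t)\|\le\frac{d(t,\mathbf{M})}{d(t,\mathbf{C})}+1.$$
   Context: $\|\cdot\|$ on matrices is the operator norm; $\pi'(t)$ is the derivative (Jacobian matrix) of $\pi$ at $t$; $d(t,A)=\inf_{a\in A}\|t-a\|$. The cutlocus $\mathbf{C}$ is the set of $x\in\mathbf{R}^s$ for which the minimizer of $L_x(\mu)=\|\mu-x\|^2$ over $\mathbf{M}$ is not unique or $L_x$ has a degenerate Hessian at its minimizer; $\pi(x)=\arg\min_{\mu\in\mathbf{M}}\|\mu-x\|$ for $x\notin\mathbf{C}$ ($\pi$ is differentiable there). *)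

theory Defs
  imports "HOL-Analysis.Analysis"
begin

text \<open>C-infinity smoothness on an open set U: there is a family of iterated
  derivatives D, indexed by lists of directions, with D [] = f on U and such that
  each D vs is Frechet differentiable at every point of U with derivative
  h maps to D (h # vs) x.  (All orders of Frechet derivatives exist on U.)\<close>
definition smooth_on :: "'a::euclidean_space set \<Rightarrow> ('a \<Rightarrow> 'b::euclidean_space) \<Rightarrow> bool" where
  "smooth_on U f \<longleftrightarrow> open U \<and>
     (\<exists>D :: 'a list \<Rightarrow> 'a \<Rightarrow> 'b.
        (\<forall>x\<in>U. D [] x = f x) \<and>
        (\<forall>vs. \<forall>x\<in>U. (D vs has_derivative (\<lambda>h. D (h # vs) x)) (at x)))"

text \<open>Local graph chart of M at p: near p, M is the graph over the affine
  subspace p + T of a smooth map g with values orthogonal to T.\<close>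
definition graph_chart :: "'a::euclidean_space set \<Rightarrow> 'a \<Rightarrow> 'a set \<Rightarrow> 'a set \<Rightarrow> ('a \<Rightarrow> 'a) \<Rightarrow> bool" where
  "graph_chart M p U T g \<longleftrightarrow>
     open U \<and> p \<in> U \<and> subspace T \<and> smooth_on UNIV g \<and>
     (\<forall>v\<in>T. \<forall>w\<in>T. g v \<bullet> w = 0) \<and>
     M \<inter> U = {p + v + g v | v. v \<in> T} \<inter> U"

definition smooth_submanifold :: "'a::euclidean_space set \<Rightarrow> bool" where
  "smooth_submanifold M \<longleftrightarrow> (\<forall>p\<in>M. \<exists>U T g. graph_chart M p U T g)"

definition second_deriv_at :: "('a::euclidean_space \<Rightarrow> real) \<Rightarrow> 'a \<Rightarrow> ('a \<Rightarrow> 'a \<Rightarrow> real) \<Rightarrow> bool" where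
  "second_deriv_at f a H \<longleftrightarrow>
     (\<exists>f'. (\<forall>\<^sub>F y in nhds a. (f has_derivative f' y) (at y)) \<and>
           (\<forall>w. ((\<lambda>y. f' y w) has_derivative (\<lambda>v. H v w)) (at a)))"

definition is_minimizer :: "'a::euclidean_space set \<Rightarrow> 'a \<Rightarrow> 'a \<Rightarrow> bool" where
  "is_minimizer M x \<mu> \<longleftrightarrow> \<mu> \<in> M \<and> (\<forall>\<nu>\<in>M. (norm (\<mu> - x))\<^sup>2 \<le> (norm (\<nu> - x))\<^sup>2)"

text \<open>The Hessian of L_x restricted to M is degenerate at mu, computed in a local
  graph chart at mu (at a critical point nondegeneracy is chart independent).\<close>
definition degenerate_hessian :: "'a::euclidean_space set \<Rightarrow> 'a \<Rightarrow> 'a \<Rightarrow> bool" where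
  "degenerate_hessian M x \<mu> \<longleftrightarrow>
     (\<exists>U T g H. graph_chart M \<mu> U T g \<and>
        second_deriv_at (\<lambda>v. (norm (\<mu> + v + g v - x))\<^sup>2) 0 H \<and>
        (\<exists>v\<in>T. v \<noteq> 0 \<and> (\<forall>w\<in>T. H v w = 0)))"

definition cutlocus :: "'a::euclidean_space set \<Rightarrow> 'a set" where
  "cutlocus M = {x. \<not> (\<exists>!\<mu>. is_minimizer M x \<mu>) \<or>
                    (\<exists>\<mu>. is_minimizer M x \<mu> \<and> degenerate_hessian M x \<mu>)}"

definition nearest :: "'a::euclidean_space set \<Rightarrow> 'a \<Rightarrow> 'a" where
  "nearest M x = (THE \<mu>. is_minimizer M x \<mu>)"

end

theory Submission
  imports Defs
begin

(* Let \<mu> be the nearest point of t and follow the normal ray \<mu> + l (t - \<mu>), l \<ge> 1. The point \<mu>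
   stays nearest for l up to some l1 \<le> \<infinity>, and if l1 is finite the ray point at l1 lies in the
   cutlocus, so d(t, C) \<le> (l1 - 1) d(t, M). In a graph chart at \<mu>, second-order minimality at
   the ray points says that the Hessian form of the squared distance is nonnegative; this form is
   affine in l, so at t it is bounded below by (1 - 1/l1) |J w|\<^sup>2, J being the derivative of the chart.
   Near t the nearest point is the unique critical point in the chart, and linearizing the critical
   equation gives \<pi>'(t) = J \<circ> V, where V h solves \<beta>(V h, u) = h \<bullet> J u on the tangent space.
   Hence |\<pi>'(t)| \<le> 1 / (1 - 1/l1) = 1 + 1/(l1 - 1) \<le> 1 + d(t, M) / d(t, C). *)

lemma norm_diff_square:
  "(norm (a - b))\<^sup>2 = (norm a)\<^sup>2 - 2 * (a \<bullet> b) + (norm (b::'a::real_inner))\<^sup>2"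
  by (simp add: power2_norm_eq_inner algebra_simps inner_commute)

lemma exists_minimizer:
  fixes M :: "'a::euclidean_space set"
  assumes "compact M" "M \<noteq> {}"
  shows "\<exists>m. is_minimizer M x m"
proof -
  obtain m where m: "m \<in> M" "\<And>y. y \<in> M \<Longrightarrow> dist x m \<le> dist x y"
    using distance_attains_inf[OF compact_imp_closed[OF assms(1)] assms(2)] by blast
  have "(norm (m - x))\<^sup>2 \<le> (norm (y - x))\<^sup>2" if "y \<in> M" for y
    using m(2)[OF that] by (simp add: dist_norm norm_minus_commute power_mono)
  then show ?thesis using m(1) by (auto simp: is_minimizer_def)
qed

lemma infdist_geI:
  assumes "A \<noteq> {}" "\<And>a. a \<in> A \<Longrightarrow> \<delta> \<le> dist x a"
  shows "\<delta> \<le> infdist x A"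
  unfolding infdist_def using assms by (auto intro!: cINF_greatest)

lemma infdist_minimizer:
  assumes "is_minimizer M t \<mu>"
  shows "infdist t M = norm (t - \<mu>)"
proof (rule antisym)
  have \<mu>M: "\<mu> \<in> M" using assms by (simp add: is_minimizer_def)
  show "infdist t M \<le> norm (t - \<mu>)" using infdist_le[OF \<mu>M, of t] by (simp add: dist_norm)
  show "norm (t - \<mu>) \<le> infdist t M"
  proof (rule infdist_geI)
    show "M \<noteq> {}" using \<mu>M by blast
    fix m assume "m \<in> M"
    then have "(norm (\<mu> - t))\<^sup>2 \<le> (norm (m - t))\<^sup>2" using assms by (simp add: is_minimizer_def)
    then have "norm (\<mu> - t) \<le> norm (m - t)" using power2_le_imp_le by fastforce
    then show "norm (t - \<mu>) \<le> dist t m" by (simp add: dist_norm norm_minus_commute)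
  qed
qed

lemma compact_tube_pos:
  fixes F :: "'p::heine_borel \<times> 'k::metric_space \<Rightarrow> real"
  assumes K: "compact K" and cont: "continuous_on (cball a 1 \<times> K) F"
    and pos: "\<forall>k\<in>K. F (a, k) > 0"
  shows "\<exists>\<delta>>0. \<forall>p k. dist p a < \<delta> \<longrightarrow> k \<in> K \<longrightarrow> F (p, k) > 0"
proof (cases "K = {}")
  case True then show ?thesis by (auto intro: exI[of _ 1])
next
  case False
  have "continuous_on K (\<lambda>k. F (a, k))"
    by (rule continuous_on_compose2[OF cont]) (auto intro!: continuous_intros)
  then obtain k0 where k0: "k0 \<in> K" "\<forall>k\<in>K. F (a, k0) \<le> F (a, k)"
    using continuous_attains_inf[OF K False] by auto
  define c where "c = F (a, k0)"
  have cpos: "c > 0" using pos k0 c_def by auto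
  have "uniformly_continuous_on (cball a 1 \<times> K) F"
    by (rule compact_uniformly_continuous[OF cont]) (simp add: compact_Times K)
  then obtain d where d: "d > 0"
    "\<forall>x\<in>cball a 1 \<times> K. \<forall>x'\<in>cball a 1 \<times> K. dist x' x < d \<longrightarrow> dist (F x') (F x) < c"
    unfolding uniformly_continuous_on_def using cpos by metis
  show ?thesis
  proof (intro exI[of _ "min d 1"] conjI allI impI)
    fix p k assume p: "dist p a < min d 1" and k: "k \<in> K"
    have "(p, k) \<in> cball a 1 \<times> K" "(a, k) \<in> cball a 1 \<times> K" using p k by (auto simp: dist_commute)
    moreover have "dist (p, k) (a, k) < d" using p by (simp add: dist_Pair_Pair)
    ultimately have "dist (F (p, k)) (F (a, k)) < c" using d by blast
    moreover have "F (a, k) \<ge> c" using k0 k c_def by auto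
    ultimately show "F (p, k) > 0" by (simp add: dist_real_def)
  qed (use d in auto)
qed

lemma strictly_nearer_persists:
  fixes y c :: "'p::heine_borel \<Rightarrow> 'a::euclidean_space"
  assumes K: "compact K" and cy: "continuous_on UNIV y" and cc: "continuous_on UNIV c"
    and nearer: "\<And>k. k \<in> K \<Longrightarrow> norm (c p0 - y p0) < norm (k - y p0)"
  shows "\<exists>\<delta>>0. \<forall>p k. dist p p0 < \<delta> \<longrightarrow> k \<in> K \<longrightarrow> norm (c p - y p) < norm (k - y p)"
proof -
  have "continuous_on (cball p0 1 \<times> K) (\<lambda>q. norm (snd q - y (fst q)) - norm (c (fst q) - y (fst q)))"
    by (intro continuous_intros continuous_on_compose2[OF cy] continuous_on_compose2[OF cc]) auto
  from compact_tube_pos[OF K this] nearer show ?thesis by simp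
qed

lemma linear_basis_expansion:
  fixes f :: "'a::euclidean_space \<Rightarrow> 'b::real_vector"
  assumes "linear f"
  shows "f w = (\<Sum>i\<in>Basis. (w \<bullet> i) *\<^sub>R f i)"
proof -
  have "f w = f (\<Sum>i\<in>Basis. (w \<bullet> i) *\<^sub>R i)" by (simp add: euclidean_representation)
  also have "\<dots> = (\<Sum>i\<in>Basis. (w \<bullet> i) *\<^sub>R f i)"
    by (simp add: linear_sum[OF assms] linear_cmul[OF assms] o_def)
  finally show ?thesis .
qed

section \<open>Positive definite bilinear forms on a subspace\<close>

lemma orthonormal_sum_inner:
  fixes B :: "'a::euclidean_space set"
  assumes fin: "finite B" and orth: "pairwise orthogonal B" and nrm: "\<And>b. b \<in> B \<Longrightarrow> norm b = 1"
    and b': "b' \<in> B"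
  shows "(\<Sum>b\<in>B. c b *\<^sub>R b) \<bullet> b' = c b'"
proof -
  have "b \<bullet> b' = (if b = b' then 1 else 0)" if "b \<in> B" for b
  proof (cases "b = b'")
    case True then show ?thesis using nrm[OF that] by (simp add: dot_square_norm)
  next
    case False then show ?thesis using orth that b' by (auto simp: pairwise_def orthogonal_def)
  qed
  then have "(\<Sum>b\<in>B. c b *\<^sub>R b) \<bullet> b' = (\<Sum>b\<in>B. if b = b' then c b else 0)"
    unfolding inner_sum_left by (intro sum.cong) auto
  also have "\<dots> = c b'" using fin b' by simp
  finally show ?thesis .
qed

lemma orthonormal_expansion:
  fixes B :: "'a::euclidean_space set"
  assumes fin: "finite B" and orth: "pairwise orthogonal B" and nrm: "\<And>b. b \<in> B \<Longrightarrow> norm b = 1"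
    and u: "u \<in> span B"
  shows "u = (\<Sum>b\<in>B. (u \<bullet> b) *\<^sub>R b)"
proof -
  define r where "r = u - (\<Sum>b\<in>B. (u \<bullet> b) *\<^sub>R b)"
  have rB: "orthogonal r b" if "b \<in> B" for b
    using orthonormal_sum_inner[OF fin orth nrm that, of "\<lambda>b. u \<bullet> b"]
    by (simp add: r_def orthogonal_def inner_diff_left)
  have "r \<in> span B" unfolding r_def
    by (intro span_diff u span_sum span_scale span_base)
  then have "orthogonal r r" by (rule orthogonal_to_span) (use rB in auto)
  then show ?thesis by (simp add: r_def orthogonal_self)
qed

lemma subspace_orthonormal_coordinates:
  fixes T :: "'a::euclidean_space set"
  assumes T: "subspace T"
  obtains B where "finite B" "B \<subseteq> T" "\<And>u. u \<in> T \<Longrightarrow> u = (\<Sum>b\<in>B. (u \<bullet> b) *\<^sub>R b)"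
    "\<And>c b'. b' \<in> B \<Longrightarrow> (\<Sum>b\<in>B. c b *\<^sub>R b) \<bullet> b' = c b'"
proof -
  obtain B where B: "B \<subseteq> T" "pairwise orthogonal B" "\<And>x. x \<in> B \<Longrightarrow> norm x = 1"
    "independent B" "span B = T"
    using orthonormal_basis_subspace[OF T] by metis
  have fin: "finite B" using B(4) by (rule independent_imp_finite)
  show ?thesis
  proof (rule that[OF fin B(1)])
    show "u = (\<Sum>b\<in>B. (u \<bullet> b) *\<^sub>R b)" if "u \<in> T" for u
      by (rule orthonormal_expansion[OF fin B(2)]) (use that B(3,5) in auto)
    show "(\<Sum>b\<in>B. c b *\<^sub>R b) \<bullet> b' = c b'" if "b' \<in> B" for c b'
      by (rule orthonormal_sum_inner[OF fin B(2)]) (use B(3) that in auto)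
  qed
qed

lemma subspace_orthogonal_sum_eq_0:
  fixes p r :: "'a::real_inner"
  assumes "p \<in> T" "\<forall>u\<in>T. r \<bullet> u = 0" "p + r = 0"
  shows "p = 0 \<and> r = 0"
proof -
  have "r = - p" using assms(3) by (simp add: eq_neg_iff_add_eq_0 add.commute)
  then have "p \<bullet> p = 0" using assms(1,2) by (metis inner_minus_left neg_equal_0_iff_equal)
  then show ?thesis using \<open>r = - p\<close> by simp
qed

lemma positive_form_representation:
  fixes T :: "'a::euclidean_space set" and A :: "'a \<Rightarrow> 'a \<Rightarrow> real"
  assumes T: "subspace T"
    and A1: "\<And>u. linear (\<lambda>v. A v u)" and A2: "\<And>v. linear (\<lambda>u. A v u)"
    and pos: "\<And>w. w \<in> T \<Longrightarrow> w \<noteq> 0 \<Longrightarrow> A w w > 0" and aT: "a \<in> T"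
  shows "\<exists>w\<in>T. \<forall>u\<in>T. A w u = a \<bullet> u"
proof -
  obtain B where fin: "finite B" and BT: "B \<subseteq> T"
    and exp: "\<And>u. u \<in> T \<Longrightarrow> u = (\<Sum>b\<in>B. (u \<bullet> b) *\<^sub>R b)"
    and inner_B: "\<And>c b'. b' \<in> B \<Longrightarrow> (\<Sum>b\<in>B. c b *\<^sub>R b) \<bullet> b' = c b'"
    using subspace_orthonormal_coordinates[OF T] by blast
  have sT: "(\<Sum>b\<in>B. c b *\<^sub>R b) \<in> T" for c using BT T by (intro subspace_sum subspace_scale) auto
  have A_exp: "A w u = (\<Sum>b\<in>B. (u \<bullet> b) * A w b)" if "u \<in> T" for w u
  proof -
    have "A w u = A w (\<Sum>b\<in>B. (u \<bullet> b) *\<^sub>R b)" using exp[OF that] by simp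
    also have "\<dots> = (\<Sum>b\<in>B. (u \<bullet> b) * A w b)"
      unfolding linear_sum[OF A2[of w]] o_def linear_cmul[OF A2[of w]] by simp
    finally show ?thesis .
  qed
  define P where "P x = (\<Sum>b\<in>B. (x \<bullet> b) *\<^sub>R b)" for x
  have perp: "(x - P x) \<bullet> u = 0" if "u \<in> T" for x u
  proof -
    have "(x - P x) \<bullet> u = (\<Sum>b\<in>B. (u \<bullet> b) * ((x - P x) \<bullet> b))"
      by (subst exp[OF that]) (simp add: inner_sum_right)
    then show ?thesis by (simp add: inner_diff_left P_def inner_B)
  qed
  \<comment> \<open>\<open>\<Lambda>\<close> is \<open>A\<close> in the coordinates of \<open>T\<close> plus the identity on its orthogonal complement.\<close>
  define \<Lambda> where "\<Lambda> w = (\<Sum>b\<in>B. A w b *\<^sub>R b) + (w - P w)" for w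
  have "linear \<Lambda>"
  proof -
    have "linear (\<lambda>w. A w b *\<^sub>R b)" for b using A1[of b] unfolding linear_iff by (simp add: scaleR_add_left)
    then have "linear (\<lambda>w. \<Sum>b\<in>B. A w b *\<^sub>R b)" by (intro linear_compose_sum) simp
    moreover have "linear P" unfolding P_def
      by (intro linear_compose_sum) (auto simp: linear_iff inner_add_left scaleR_add_left)
    ultimately show ?thesis unfolding \<Lambda>_def linear_iff by (simp add: algebra_simps scaleR_diff_right)
  qed
  moreover have "inj \<Lambda>"
    unfolding linear_injective_0[OF \<open>linear \<Lambda>\<close>]
  proof (intro allI impI)
    fix w assume "\<Lambda> w = 0"
    then have z: "(\<Sum>b\<in>B. A w b *\<^sub>R b) = 0 \<and> w - P w = 0"
      using subspace_orthogonal_sum_eq_0[OF sT] perp unfolding \<Lambda>_def by blast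
    then have wT: "w \<in> T" using sT[of "\<lambda>b. w \<bullet> b"] by (simp add: P_def)
    have "A w b = 0" if "b \<in> B" for b using inner_B[OF that, of "\<lambda>b. A w b"] z by simp
    then have "A w w = 0" using A_exp[OF wT] by simp
    then show "w = 0" using pos[OF wT] by fastforce
  qed
  ultimately have "surj \<Lambda>" by (intro linear_injective_imp_surjective) simp_all
  then obtain w where "\<Lambda> w = a" by (metis surjD)
  then have "(\<Sum>b\<in>B. A w b *\<^sub>R b) - a + (w - P w) = 0" by (simp add: \<Lambda>_def algebra_simps)
  moreover have "(\<Sum>b\<in>B. A w b *\<^sub>R b) - a \<in> T" using sT aT T by (simp add: subspace_diff)
  moreover have "\<forall>u\<in>T. (w - P w) \<bullet> u = 0" using perp by blast
  ultimately have "(\<Sum>b\<in>B. A w b *\<^sub>R b) - a = 0 \<and> w - P w = 0"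
    using subspace_orthogonal_sum_eq_0 by blast
  then have s: "(\<Sum>b\<in>B. A w b *\<^sub>R b) = a" and wT: "w \<in> T"
    using sT[of "\<lambda>b. w \<bullet> b"] by (auto simp: P_def)
  have "A w u = a \<bullet> u" if "u \<in> T" for u
  proof -
    have "A w u = (\<Sum>b\<in>B. (u \<bullet> b) * (a \<bullet> b))"
      using A_exp[OF that] inner_B[of _ "\<lambda>b. A w b"] s by simp
    also have "\<dots> = a \<bullet> (\<Sum>b\<in>B. (u \<bullet> b) *\<^sub>R b)" by (simp add: inner_sum_right mult.commute)
    also have "\<dots> = a \<bullet> u" using exp[OF that] by simp
    finally show ?thesis .
  qed
  then show ?thesis using wT by blast
qed

lemma positive_form_solution_operator:
  fixes T :: "'a::euclidean_space set" and A :: "'a \<Rightarrow> 'a \<Rightarrow> real" and J :: "'a \<Rightarrow> 'a"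
  assumes T: "subspace T"
    and A1: "\<And>u. linear (\<lambda>v. A v u)" and A2: "\<And>v. linear (\<lambda>u. A v u)"
    and pos: "\<And>w. w \<in> T \<Longrightarrow> w \<noteq> 0 \<Longrightarrow> A w w > 0" and linJ: "linear J"
  shows "\<exists>V. linear V \<and> (\<forall>h. V h \<in> T) \<and> (\<forall>h u. u \<in> T \<longrightarrow> A (V h) u = h \<bullet> J u)"
proof -
  obtain B where "finite B" and BT: "B \<subseteq> T" and exp: "\<And>u. u \<in> T \<Longrightarrow> u = (\<Sum>b\<in>B. (u \<bullet> b) *\<^sub>R b)"
    and "\<And>c b'. b' \<in> B \<Longrightarrow> (\<Sum>b\<in>B. c b *\<^sub>R b) \<bullet> b' = c b'"
    using subspace_orthonormal_coordinates[OF T] by blast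
  have "\<forall>b\<in>B. \<exists>w. w \<in> T \<and> (\<forall>u\<in>T. A w u = b \<bullet> u)"
    using positive_form_representation[OF T A1 A2 pos] BT by blast
  then obtain W where W: "\<And>b. b \<in> B \<Longrightarrow> W b \<in> T \<and> (\<forall>u\<in>T. A (W b) u = b \<bullet> u)"
    by metis
  define V where "V h = (\<Sum>b\<in>B. (h \<bullet> J b) *\<^sub>R W b)" for h
  show ?thesis
  proof (intro exI[of _ V] conjI allI impI)
    show "linear V" unfolding V_def
      by (intro linear_compose_sum) (auto simp: linear_iff inner_add_left scaleR_add_left)
    show "V h \<in> T" for h unfolding V_def using W T by (intro subspace_sum subspace_scale) auto
    fix h u assume u: "u \<in> T"
    have "A (V h) u = (\<Sum>b\<in>B. (h \<bullet> J b) * A (W b) u)"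
      unfolding V_def linear_sum[OF A1[of u]] o_def linear_cmul[OF A1[of u]] by simp
    also have "\<dots> = (\<Sum>b\<in>B. (h \<bullet> J b) * (b \<bullet> u))" using W u by simp
    also have "\<dots> = h \<bullet> J (\<Sum>b\<in>B. (u \<bullet> b) *\<^sub>R b)"
      unfolding linear_sum[OF linJ] o_def linear_cmul[OF linJ]
      by (simp add: inner_sum_right inner_commute mult.commute)
    also have "\<dots> = h \<bullet> J u" using exp[OF u] by simp
    finally show "A (V h) u = h \<bullet> J u" .
  qed
qed

lemma linear_coeff_zero_if_quadratic_nonneg:
  fixes a b :: real
  assumes b: "b \<ge> 0" and nn: "\<And>s. 2 * s * a + s\<^sup>2 * b \<ge> 0"
  shows "a = 0"
proof -
  define s where "s = - a / (b + 1)"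
  have bp: "b + 1 \<noteq> 0" using b by simp
  have e1: "(b + 1)\<^sup>2 * (2 * s * a) = - 2 * a\<^sup>2 * (b + 1)"
    unfolding s_def using bp by (simp add: power2_eq_square field_simps)
  have "(b + 1)\<^sup>2 * (s\<^sup>2 * b) = a\<^sup>2 * b"
    using bp by (simp add: s_def power_divide)
  with e1 have "(b + 1)\<^sup>2 * (2 * s * a + s\<^sup>2 * b) = - 2 * a\<^sup>2 * (b + 1) + a\<^sup>2 * b"
    by (simp only: distrib_left)
  also have "\<dots> = - a\<^sup>2 * (b + 2)" by (simp add: algebra_simps)
  finally have "(b + 1)\<^sup>2 * (2 * s * a + s\<^sup>2 * b) = - a\<^sup>2 * (b + 2)" .
  moreover have "(b + 1)\<^sup>2 * (2 * s * a + s\<^sup>2 * b) \<ge> 0" using nn[of s] by simp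
  ultimately have "a\<^sup>2 * (b + 2) \<le> 0" by linarith
  then have "a\<^sup>2 \<le> 0" using b by (simp add: mult_le_0_iff)
  then show ?thesis by simp
qed

lemma absorb_into_left:
  fixes \<kappa> \<eta> a b c C :: real
  assumes "\<kappa> > 0" "\<eta> \<le> \<kappa>/2" "\<eta> > 0" "a \<ge> 0" "c \<ge> 0" "C \<ge> 0"
    and "\<kappa> * a\<^sup>2 \<le> \<eta> * (b + c) * a" "b \<le> C * c + a"
  shows "\<kappa> * a \<le> 2 * \<eta> * (C + 1) * c"
proof (cases "a = 0")
  case True then show ?thesis using assms by simp
next
  case False
  then have ap: "a > 0" using assms by simp
  have "\<kappa> * a * a \<le> (\<eta> * (b + c)) * a" using assms(7) by (simp add: power2_eq_square mult.assoc)
  then have "\<kappa> * a \<le> \<eta> * (b + c)" using ap by simp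
  also have "\<dots> \<le> \<eta> * (C * c + a + c)" using assms by (intro mult_left_mono) auto
  finally have "(\<kappa> - \<eta>) * a \<le> \<eta> * (C + 1) * c" by (simp add: algebra_simps)
  moreover have "(\<kappa> / 2) * a \<le> (\<kappa> - \<eta>) * a" using assms ap by (intro mult_right_mono) auto
  ultimately show ?thesis by linarith
qed

section \<open>Nondegeneracy inside the normal segment\<close>

lemma pos_second_deriv_if_quadratic_growth:
  fixes \<psi> \<psi>' :: "real \<Rightarrow> real"
  assumes d: "\<forall>\<^sub>F \<tau> in nhds 0. (\<psi> has_real_derivative \<psi>' \<tau>) (at \<tau>)"
    and d2: "(\<psi>' has_real_derivative a) (at 0)"
    and growth: "\<forall>\<^sub>F \<tau> in nhds 0. \<psi> \<tau> - \<psi> 0 \<ge> c * \<tau>\<^sup>2" and c: "c > 0"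
  shows "a > 0"
proof (rule ccontr)
  assume a: "\<not> a > 0"
  obtain e where e: "e > 0"
    "\<And>\<tau>. dist \<tau> 0 < e \<Longrightarrow> (\<psi> has_real_derivative \<psi>' \<tau>) (at \<tau>) \<and> \<psi> \<tau> - \<psi> 0 \<ge> c * \<tau>\<^sup>2"
    using eventually_conj[OF d growth] unfolding eventually_nhds_metric by blast
  have "\<psi>' 0 = 0"
  proof (rule DERIV_local_min)
    show "(\<psi> has_real_derivative \<psi>' 0) (at 0)" using e by auto
    show "\<forall>y. \<bar>0 - y\<bar> < e \<longrightarrow> \<psi> 0 \<le> \<psi> y"
    proof (intro allI impI)
      fix y :: real assume "\<bar>0 - y\<bar> < e"
      then have "\<psi> y - \<psi> 0 \<ge> c * y\<^sup>2" using e by (auto simp: dist_real_def)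
      moreover have "c * y\<^sup>2 \<ge> 0" using c by auto
      ultimately show "\<psi> 0 \<le> \<psi> y" by linarith
    qed
  qed (use e in auto)
  moreover have "(\<psi>' has_derivative (*) a) (at 0)"
    using d2 by (rule has_field_derivative_imp_has_derivative)
  ultimately obtain \<delta> where \<delta>: "\<delta> > 0" "\<And>y. norm y < \<delta> \<Longrightarrow> \<bar>\<psi>' y - a * y\<bar> \<le> (c/2) * \<bar>y\<bar>"
    unfolding has_derivative_at_alt using c by (metis half_gt_zero diff_zero real_norm_def)
  define \<tau> where "\<tau> = min e \<delta> / 2"
  have \<tau>: "\<tau> > 0" "\<tau> < e" "\<tau> < \<delta>" using e \<delta> by (auto simp: \<tau>_def)
  obtain \<xi> where \<xi>: "0 < \<xi>" "\<xi> < \<tau>" "\<psi> \<tau> - \<psi> 0 = (\<tau> - 0) * \<psi>' \<xi>"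
    using MVT2[OF \<tau>(1), of \<psi> \<psi>'] e \<tau> by (force simp: dist_real_def)
  have "\<bar>\<psi>' \<xi> - a * \<xi>\<bar> \<le> (c/2) * \<xi>" using \<delta>(2)[of \<xi>] \<xi> \<tau> by simp
  moreover have "a * \<xi> \<le> 0" using a \<xi> by (simp add: mult_nonpos_nonneg)
  ultimately have "\<psi>' \<xi> \<le> (c/2) * \<xi>" by linarith
  then have "\<psi> \<tau> - \<psi> 0 \<le> \<tau> * ((c/2) * \<xi>)" using \<xi> \<tau> by (simp add: mult_left_mono)
  also have "\<dots> < c * \<tau>\<^sup>2" using \<xi> \<tau> c by (simp add: power2_eq_square)
  finally show False using e(2)[of \<tau>] \<tau> by (auto simp: dist_real_def)
qed

lemma norm_sq_diff_ray_point:
  fixes z m y :: "'a::real_inner"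
  shows "(norm (z - (m + \<theta> *\<^sub>R (y - m))))\<^sup>2 - (norm (m - (m + \<theta> *\<^sub>R (y - m))))\<^sup>2
    = (1 - \<theta>) * (norm (z - m))\<^sup>2 + \<theta> * ((norm (z - y))\<^sup>2 - (norm (m - y))\<^sup>2)"
  unfolding power2_norm_eq_inner
  by (simp add: inner_diff_left inner_diff_right inner_add_left inner_add_right
      algebra_simps inner_commute)

lemma graph_chart_base:
  assumes ch: "graph_chart M m U T g" and mM: "m \<in> M"
  shows "g 0 = 0"
proof -
  have "m \<in> M \<inter> U" using ch mM unfolding graph_chart_def by blast
  then have "m \<in> {m + v + g v |v. v \<in> T}" using ch unfolding graph_chart_def by blast
  then obtain v0 where v0: "v0 \<in> T" "m = m + v0 + g v0" by blast
  have "g v0 \<bullet> v0 = 0" using ch v0 by (auto simp: graph_chart_def)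
  moreover have "v0 + g v0 = 0" using v0(2) by (metis add.assoc add_cancel_right_right)
  then have "v0 = - g v0" by (simp add: eq_neg_iff_add_eq_0)
  ultimately have "v0 \<bullet> v0 = 0" by (metis inner_minus_left neg_equal_0_iff_equal)
  then have "v0 = 0" by simp
  then show ?thesis using v0 by simp
qed

lemma smooth_on_UNIV_continuous:
  assumes "smooth_on UNIV g"
  shows "continuous_on UNIV g"
proof -
  obtain D where D: "\<forall>x. D [] x = g x" "\<forall>vs x. (D vs has_derivative (\<lambda>h. D (h # vs) x)) (at x)"
    using assms unfolding smooth_on_def by auto
  have "g = D []" using D by auto
  then show ?thesis using D(2) by (auto intro!: continuous_at_imp_continuous_on has_derivative_continuous)
qed

lemma second_deriv_at_pos_if_quadratic_growth:
  fixes f :: "'a::euclidean_space \<Rightarrow> real"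
  assumes sd: "second_deriv_at f 0 H"
    and growth: "\<forall>\<^sub>F \<tau> in nhds 0. f (\<tau> *\<^sub>R v) - f 0 \<ge> c * \<tau>\<^sup>2" and c: "c > 0"
  shows "H v v > 0"
proof -
  obtain f' where f': "\<forall>\<^sub>F z in nhds 0. (f has_derivative f' z) (at z)"
    "\<forall>w. ((\<lambda>z. f' z w) has_derivative (\<lambda>u. H u w)) (at 0)"
    using sd unfolding second_deriv_at_def by blast
  obtain e where e: "e > 0" "\<And>z. dist z 0 < e \<Longrightarrow> (f has_derivative f' z) (at z)"
    using f'(1) unfolding eventually_nhds_metric by blast
  define \<psi>' where "\<psi>' = (\<lambda>\<tau>::real. f' (\<tau> *\<^sub>R v) v)"
  have "\<forall>\<^sub>F \<tau> in nhds 0. ((\<lambda>\<tau>. f (\<tau> *\<^sub>R v)) has_real_derivative \<psi>' \<tau>) (at \<tau>)"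
    unfolding eventually_nhds_metric
  proof (intro exI[of _ "e / (norm v + 1)"] conjI allI impI)
    show "e / (norm v + 1) > 0" using e by (simp add: add_nonneg_pos)
    fix \<tau> :: real assume "dist \<tau> 0 < e / (norm v + 1)"
    then have "\<bar>\<tau>\<bar> * (norm v + 1) < e" by (simp add: dist_real_def pos_less_divide_eq add_nonneg_pos)
    moreover have "\<bar>\<tau>\<bar> * norm v \<le> \<bar>\<tau>\<bar> * (norm v + 1)" by (simp add: mult_left_mono)
    ultimately have "dist (\<tau> *\<^sub>R v) 0 < e" by simp
    then have fd: "(f has_derivative f' (\<tau> *\<^sub>R v)) (at (\<tau> *\<^sub>R v))" using e by auto
    have lin: "linear (f' (\<tau> *\<^sub>R v))" using fd by (rule has_derivative_linear)
    have "((\<lambda>s. f (s *\<^sub>R v)) has_derivative (\<lambda>s. f' (\<tau> *\<^sub>R v) (s *\<^sub>R v))) (at \<tau>)"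
      by (rule has_derivative_compose[where g=f and f="\<lambda>s. s *\<^sub>R v", OF _ fd])
         (auto intro!: derivative_eq_intros)
    then show "((\<lambda>\<tau>. f (\<tau> *\<^sub>R v)) has_real_derivative \<psi>' \<tau>) (at \<tau>)"
      unfolding \<psi>'_def by (rule has_derivative_imp_has_field_derivative) (simp add: linear_cmul[OF lin])
  qed
  moreover have "(\<psi>' has_real_derivative H v v) (at 0)"
  proof -
    have hd: "((\<lambda>z. f' z v) has_derivative (\<lambda>u. H u v)) (at (0 *\<^sub>R v))" using f'(2) by simp
    have lin: "linear (\<lambda>u. H u v)" using f'(2) has_derivative_linear by blast
    have "((\<lambda>s. f' (s *\<^sub>R v) v) has_derivative (\<lambda>s. H (s *\<^sub>R v) v)) (at 0)"
      by (rule has_derivative_compose[where g="\<lambda>z. f' z v" and f="\<lambda>s. s *\<^sub>R v", OF _ hd])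
         (auto intro!: derivative_eq_intros)
    then show ?thesis unfolding \<psi>'_def
      by (rule has_derivative_imp_has_field_derivative) (simp add: linear_cmul[OF lin])
  qed
  moreover have "\<forall>\<^sub>F \<tau> in nhds 0. (\<lambda>\<tau>. f (\<tau> *\<^sub>R v)) \<tau> - (\<lambda>\<tau>. f (\<tau> *\<^sub>R v)) 0 \<ge> c * \<tau>\<^sup>2"
    using growth by simp
  ultimately show ?thesis using c by (rule pos_second_deriv_if_quadratic_growth)
qed

lemma graph_chart_eventually_in:
  assumes ch: "graph_chart M m U T g" and mM: "m \<in> M"
  shows "\<forall>\<^sub>F \<tau> in nhds (0::real). m + \<tau> *\<^sub>R v + g (\<tau> *\<^sub>R v) \<in> U"
proof -
  have g0: "g 0 = 0" by (rule graph_chart_base[OF ch mM])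
  have "isCont g (0 *\<^sub>R v)"
    using ch by (auto simp: graph_chart_def continuous_on_eq_continuous_at dest: smooth_on_UNIV_continuous)
  then have "isCont (\<lambda>\<tau>::real. g (\<tau> *\<^sub>R v)) 0"
    using isCont_o2[where f="\<lambda>\<tau>::real. \<tau> *\<^sub>R v" and a=0 and g=g] by (simp add: continuous_intros)
  then have "((\<lambda>\<tau>::real. m + \<tau> *\<^sub>R v + g (\<tau> *\<^sub>R v)) \<longlongrightarrow> m) (at 0)"
    using g0 unfolding isCont_def by (auto intro!: tendsto_eq_intros)
  moreover have "open U" "m \<in> U" using ch by (auto simp: graph_chart_def)
  ultimately have "\<forall>\<^sub>F \<tau> in at 0. m + \<tau> *\<^sub>R v + g (\<tau> *\<^sub>R v) \<in> U"
    by (rule topological_tendstoD)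
  then show ?thesis using \<open>m \<in> U\<close> g0 by (simp add: eventually_nhds_conv_at)
qed

text \<open>At \<open>x = m + \<theta> (y - m)\<close> the squared distance grows along the chart at least like
  \<open>(1 - \<theta>) |v|\<^sup>2\<close>, by the identity \<open>norm_sq_diff_ray_point\<close> and the minimality of \<open>m\<close> for \<open>y\<close>.\<close>
lemma hessian_pos_before_minimizer:
  fixes M :: "'a::euclidean_space set"
  assumes ch: "graph_chart M m U T g"
    and ymin: "is_minimizer M y m" and th: "0 \<le> \<theta>" "\<theta> < 1"
    and sd: "second_deriv_at (\<lambda>v. (norm (m + v + g v - (m + \<theta> *\<^sub>R (y - m))))\<^sup>2) 0 H"
    and v: "v \<in> T" "v \<noteq> 0"
  shows "H v v > 0"
proof (rule second_deriv_at_pos_if_quadratic_growth[OF sd])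
  have mM: "m \<in> M" using ymin by (simp add: is_minimizer_def)
  have g0: "g 0 = 0" by (rule graph_chart_base[OF ch mM])
  show "(1 - \<theta>) * (norm v)\<^sup>2 > 0" using th v by simp
  show "\<forall>\<^sub>F \<tau> in nhds 0. (norm (m + \<tau> *\<^sub>R v + g (\<tau> *\<^sub>R v) - (m + \<theta> *\<^sub>R (y - m))))\<^sup>2
      - (norm (m + 0 + g 0 - (m + \<theta> *\<^sub>R (y - m))))\<^sup>2 \<ge> ((1 - \<theta>) * (norm v)\<^sup>2) * \<tau>\<^sup>2"
    using graph_chart_eventually_in[OF ch mM, of v]
  proof (rule eventually_mono)
    fix \<tau> :: real
    define z where "z = m + \<tau> *\<^sub>R v + g (\<tau> *\<^sub>R v)"
    assume "z \<in> U"
    moreover have tv: "\<tau> *\<^sub>R v \<in> T" using ch v by (auto simp: graph_chart_def subspace_scale)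
    ultimately have "z \<in> M" using ch unfolding graph_chart_def z_def by blast
    then have zy: "(norm (z - y))\<^sup>2 - (norm (m - y))\<^sup>2 \<ge> 0"
      using ymin by (auto simp: is_minimizer_def norm_minus_commute)
    have "g (\<tau> *\<^sub>R v) \<bullet> v = 0" using ch tv v by (auto simp: graph_chart_def)
    then have "(norm (z - m))\<^sup>2 = \<tau>\<^sup>2 * (norm v)\<^sup>2 + (norm (g (\<tau> *\<^sub>R v)))\<^sup>2"
      unfolding z_def power2_norm_eq_inner
      by (simp add: inner_add_left inner_add_right inner_commute power2_eq_square)
    then have zm: "(norm (z - m))\<^sup>2 \<ge> \<tau>\<^sup>2 * (norm v)\<^sup>2" by simp
    have "(norm (z - (m + \<theta> *\<^sub>R (y - m))))\<^sup>2 - (norm (m - (m + \<theta> *\<^sub>R (y - m))))\<^sup>2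
        = (1 - \<theta>) * (norm (z - m))\<^sup>2 + \<theta> * ((norm (z - y))\<^sup>2 - (norm (m - y))\<^sup>2)"
      by (rule norm_sq_diff_ray_point)
    also have "\<dots> \<ge> (1 - \<theta>) * (\<tau>\<^sup>2 * (norm v)\<^sup>2)"
      using mult_left_mono[OF zm, of "1 - \<theta>"] zy th by (smt (verit) zero_le_mult_iff)
    finally show "(norm (z - (m + \<theta> *\<^sub>R (y - m))))\<^sup>2 - (norm (m + 0 + g 0 - (m + \<theta> *\<^sub>R (y - m))))\<^sup>2
        \<ge> ((1 - \<theta>) * (norm v)\<^sup>2) * \<tau>\<^sup>2"
      using g0 by (simp add: algebra_simps)
  qed
qed

lemma minimizer_unique_if_ray_extends:
  fixes m m' x :: "'a::euclidean_space"
  assumes xm: "is_minimizer M x m" and xm': "is_minimizer M x m'"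
    and ym: "is_minimizer M (m + l *\<^sub>R (x - m)) m" and l: "l > 1"
  shows "m' = m"
proof -
  define a where "a = m' - m"
  define b where "b = x - m"
  have "m' \<in> M" "m \<in> M" using xm xm' by (auto simp: is_minimizer_def)
  have e1: "(norm (m - x))\<^sup>2 = (norm (m' - x))\<^sup>2"
    using xm xm' \<open>m' \<in> M\<close> \<open>m \<in> M\<close> unfolding is_minimizer_def by (meson antisym)
  have e2: "(norm (m - (m + l *\<^sub>R (x - m))))\<^sup>2 \<le> (norm (m' - (m + l *\<^sub>R (x - m))))\<^sup>2"
    using ym \<open>m' \<in> M\<close> unfolding is_minimizer_def by blast
  have "m' - x = a - b" "m - x = - b" unfolding a_def b_def by auto
  then have "(norm a)\<^sup>2 = 2 * (a \<bullet> b)" using e1 norm_diff_square[of a b] by simp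
  moreover have "m' - (m + l *\<^sub>R (x - m)) = a - l *\<^sub>R b" "m - (m + l *\<^sub>R (x - m)) = - (l *\<^sub>R b)"
    unfolding a_def b_def by (auto simp: algebra_simps)
  ultimately have n: "(norm (m' - (m + l *\<^sub>R (x - m))))\<^sup>2 = (norm a)\<^sup>2 - 2 * l * (a \<bullet> b) + l\<^sup>2 * (norm b)\<^sup>2"
      "(norm (m - (m + l *\<^sub>R (x - m))))\<^sup>2 = l\<^sup>2 * (norm b)\<^sup>2"
    using norm_diff_square[of a "l *\<^sub>R b"] by (auto simp: power_mult_distrib)
  then have "(norm a)\<^sup>2 \<ge> 2 * l * (a \<bullet> b)" using e2 by linarith
  then have "(norm a)\<^sup>2 \<ge> l * (norm a)\<^sup>2" using \<open>(norm a)\<^sup>2 = 2 * (a \<bullet> b)\<close> by (simp add: algebra_simps)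
  then have "(l - 1) * (norm a)\<^sup>2 \<le> 0" by (simp add: algebra_simps)
  then have "(norm a)\<^sup>2 \<le> 0" using l by (simp add: mult_le_0_iff)
  then show ?thesis unfolding a_def by simp
qed

lemma not_cutlocus_if_ray_extends:
  fixes M :: "'a::euclidean_space set"
  assumes xm: "is_minimizer M x m" and ym: "is_minimizer M (m + l *\<^sub>R (x - m)) m" and l: "l > 1"
  shows "x \<notin> cutlocus M"
proof -
  have uniq: "\<And>m'. is_minimizer M x m' \<Longrightarrow> m' = m" using minimizer_unique_if_ray_extends[OF xm _ ym l] by blast
  have nd: "\<not> degenerate_hessian M x m"
  proof
    assume "degenerate_hessian M x m"
    then obtain U T g H v where ch: "graph_chart M m U T g"
      and sd: "second_deriv_at (\<lambda>v. (norm (m + v + g v - x))\<^sup>2) 0 H"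
      and v: "v \<in> T" "v \<noteq> 0" "\<forall>w\<in>T. H v w = 0"
      unfolding degenerate_hessian_def by blast
    have xe: "x = m + (1/l) *\<^sub>R ((m + l *\<^sub>R (x - m)) - m)" using l by simp
    have "H v v > 0"
      by (rule hessian_pos_before_minimizer[OF ch ym _ _ _ v(1,2), of "1/l"]) (use l sd xe in auto)
    then show False using v by auto
  qed
  show ?thesis unfolding cutlocus_def using xm uniq nd by blast
qed

lemma unique_minimizer_strict:
  assumes "is_minimizer M y \<mu>" and "\<And>m. is_minimizer M y m \<Longrightarrow> m = \<mu>"
    and "m \<in> M" "m \<noteq> \<mu>"
  shows "norm (\<mu> - y) < norm (m - y)"
proof -
  have "(norm (\<mu> - y))\<^sup>2 \<le> (norm (m - y))\<^sup>2" using assms(1,3) by (simp add: is_minimizer_def)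
  moreover have "(norm (\<mu> - y))\<^sup>2 \<noteq> (norm (m - y))\<^sup>2"
  proof
    assume "(norm (\<mu> - y))\<^sup>2 = (norm (m - y))\<^sup>2"
    then have "is_minimizer M y m" using assms(1,3) by (auto simp: is_minimizer_def)
    then show False using assms(2,4) by blast
  qed
  ultimately have "(norm (\<mu> - y))\<^sup>2 < (norm (m - y))\<^sup>2" by linarith
  then show ?thesis by (simp add: power_less_imp_less_base)
qed

section \<open>A graph chart at the nearest point\<close>

locale nearest_chart =
  fixes M :: "'a::euclidean_space set" and t \<mu> :: 'a and U T :: "'a set"
    and g :: "'a \<Rightarrow> 'a" and D :: "'a list \<Rightarrow> 'a \<Rightarrow> 'a"
  assumes cM: "compact M"
    and tmin: "is_minimizer M t \<mu>"
    and ch: "graph_chart M \<mu> U T g"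
    and D0: "\<And>x. D [] x = g x"
    and Dd: "\<And>vs x. (D vs has_derivative (\<lambda>h. D (h # vs) x)) (at x)"
begin

text \<open>The quantity \<open>q z y w\<close> is half the second derivative of
  \<open>\<tau> \<mapsto> |\<phi> (z + \<tau> w) - y|\<^sup>2\<close> at \<open>\<tau> = 0\<close>.\<close>

definition \<phi> where "\<phi> z = \<mu> + z + g z"
definition J where "J w = w + D [w] 0"
definition q where "q z y w = (norm (w + D [w] z))\<^sup>2 + (\<phi> z - y) \<bullet> D [w, w] z"

lemma \<mu>M: "\<mu> \<in> M" using tmin by (simp add: is_minimizer_def)
lemma g0: "g 0 = 0" using graph_chart_base[OF ch \<mu>M] .
lemma \<phi>0: "\<phi> 0 = \<mu>" by (simp add: \<phi>_def g0)
lemma openU: "open U" and \<mu>U: "\<mu> \<in> U" and subT: "subspace T"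
  and orthT: "\<And>v w. v \<in> T \<Longrightarrow> w \<in> T \<Longrightarrow> g v \<bullet> w = 0"
  and MU: "M \<inter> U = {\<mu> + v + g v | v. v \<in> T} \<inter> U"
  using ch by (auto simp: graph_chart_def)

lemma g_eq_D: "g = D []" using D0 by auto

lemma linear_D: "linear (\<lambda>h. D (h # vs) x)" using Dd by (rule has_derivative_linear)

lemma isCont_D: "isCont (D vs) x" using Dd by (rule has_derivative_continuous)

lemma D1_expand: "D [w] z = (\<Sum>i\<in>Basis. (w \<bullet> i) *\<^sub>R D [i] z)"
  by (rule linear_basis_expansion[OF linear_D[where vs="[]" and x=z]])

lemma D2_expand1: "D (a # vs) z = (\<Sum>i\<in>Basis. (a \<bullet> i) *\<^sub>R D (i # vs) z)"
  by (rule linear_basis_expansion[OF linear_D[where vs=vs and x=z]])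

lemma D2_expand2: "D [a, b] z = (\<Sum>i\<in>Basis. (b \<bullet> i) *\<^sub>R D [a, i] z)"
proof -
  have e: "D [b] = (\<lambda>z. \<Sum>i\<in>Basis. (b \<bullet> i) *\<^sub>R D [i] z)" by (rule ext, rule D1_expand)
  have "(D [b] has_derivative (\<lambda>a. \<Sum>i\<in>Basis. (b \<bullet> i) *\<^sub>R D [a, i] z)) (at z)"
    unfolding e by (auto intro!: derivative_eq_intros Dd)
  then have "(\<lambda>a. D [a, b] z) = (\<lambda>a. \<Sum>i\<in>Basis. (b \<bullet> i) *\<^sub>R D [a, i] z)"
    by (rule has_derivative_unique[OF Dd[where vs="[b]" and x=z]])
  then show ?thesis by (rule fun_cong)
qed

lemma D2_expand: "D [w, w] z = (\<Sum>i\<in>Basis. (w \<bullet> i) *\<^sub>R (\<Sum>j\<in>Basis. (w \<bullet> j) *\<^sub>R D [j, i] z))"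
proof -
  have "D [w, w] z = (\<Sum>i\<in>Basis. (w \<bullet> i) *\<^sub>R D [w, i] z)" by (rule D2_expand2)
  also have "\<dots> = (\<Sum>i\<in>Basis. (w \<bullet> i) *\<^sub>R (\<Sum>j\<in>Basis. (w \<bullet> j) *\<^sub>R D [j, i] z))"
    by (rule sum.cong[OF refl]) (simp only: D2_expand1[where a=w])
  finally show ?thesis .
qed

lemma D1_scale: "D [c *\<^sub>R w] z = c *\<^sub>R D [w] z"
  using linear_cmul[OF linear_D[where vs="[]" and x=z]] by simp

lemma D2_scale: "D [c *\<^sub>R w, c *\<^sub>R w] z = (c * c) *\<^sub>R D [w, w] z"
proof -
  have "D [c *\<^sub>R w, c *\<^sub>R w] z = c *\<^sub>R D [w, c *\<^sub>R w] z"
    using linear_cmul[OF linear_D[where vs="[c *\<^sub>R w]" and x=z]] by simp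
  also have "D [w, c *\<^sub>R w] z = c *\<^sub>R D [w, w] z"
    unfolding D2_expand2[where a=w and b="c *\<^sub>R w" and z=z] D2_expand2[where a=w and b=w and z=z]
    by (simp add: scaleR_sum_right)
  finally show ?thesis by simp
qed

lemma q_scale: "q z y (c *\<^sub>R w) = c\<^sup>2 * q z y w"
proof -
  have "(norm (c *\<^sub>R w + D [c *\<^sub>R w] z))\<^sup>2 = c\<^sup>2 * (norm (w + D [w] z))\<^sup>2"
    by (simp add: D1_scale scaleR_add_right[symmetric] power_mult_distrib del: scaleR_add_right)
  then show ?thesis unfolding q_def by (simp add: D2_scale power2_eq_square algebra_simps)
qed

lemma phi_eq_D: "\<phi> = (\<lambda>z. \<mu> + z + D [] z)" by (auto simp: \<phi>_def D0)

lemma phi_has_derivative: "(\<phi> has_derivative (\<lambda>h. h + D [h] z)) (at z)"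
  unfolding phi_eq_D by (auto intro!: derivative_eq_intros Dd)

lemma D1_has_derivative: "((\<lambda>z. D [w] z) has_derivative (\<lambda>h. D [h, w] z)) (at z)"
  using Dd[of "[w]" z] by simp

lemma sqdist_line_deriv: "((\<lambda>\<tau>::real. (norm (\<phi> (z + \<tau> *\<^sub>R w) - y))\<^sup>2) has_real_derivative
    2 * ((\<phi> (z + \<tau> *\<^sub>R w) - y) \<bullet> (w + D [w] (z + \<tau> *\<^sub>R w)))) (at \<tau>)"
proof -
  have l: "linear (\<lambda>h. D [h] (z + \<tau> *\<^sub>R w))" using linear_D[where vs="[]"] by simp
  have d1: "((\<lambda>\<tau>::real. \<phi> (z + \<tau> *\<^sub>R w)) has_derivative (\<lambda>s. s *\<^sub>R w + D [s *\<^sub>R w] (z + \<tau> *\<^sub>R w))) (at \<tau>)"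
    by (rule has_derivative_compose[where g=\<phi> and f="\<lambda>\<tau>. z + \<tau> *\<^sub>R w", OF _ phi_has_derivative]) (auto intro!: derivative_eq_intros)
  have "((\<lambda>\<tau>::real. (\<phi> (z + \<tau> *\<^sub>R w) - y) \<bullet> (\<phi> (z + \<tau> *\<^sub>R w) - y)) has_derivative
     (\<lambda>s. (\<phi> (z + \<tau> *\<^sub>R w) - y) \<bullet> (s *\<^sub>R w + D [s *\<^sub>R w] (z + \<tau> *\<^sub>R w)) + (s *\<^sub>R w + D [s *\<^sub>R w] (z + \<tau> *\<^sub>R w)) \<bullet> (\<phi> (z + \<tau> *\<^sub>R w) - y))) (at \<tau>)"
    by (rule has_derivative_inner) (auto intro!: derivative_eq_intros d1)
  then show ?thesis unfolding power2_norm_eq_inner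
    by (rule has_derivative_imp_has_field_derivative)
       (simp add: linear_cmul[OF l] inner_commute inner_add_right inner_add_left algebra_simps)
qed

lemma sqdist_line_deriv2: "((\<lambda>\<tau>::real. (\<phi> (z + \<tau> *\<^sub>R w) - y) \<bullet> (w + D [w] (z + \<tau> *\<^sub>R w))) has_real_derivative
    q (z + \<tau> *\<^sub>R w) y w) (at \<tau>)"
proof -
  have l: "linear (\<lambda>h. D [h] (z + \<tau> *\<^sub>R w))" using linear_D[where vs="[]"] by simp
  have l2: "linear (\<lambda>h. D [h, w] (z + \<tau> *\<^sub>R w))" using linear_D[where vs="[w]"] by simp
  have d1: "((\<lambda>\<tau>::real. \<phi> (z + \<tau> *\<^sub>R w)) has_derivative (\<lambda>s. s *\<^sub>R w + D [s *\<^sub>R w] (z + \<tau> *\<^sub>R w))) (at \<tau>)"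
    by (rule has_derivative_compose[where g=\<phi> and f="\<lambda>\<tau>. z + \<tau> *\<^sub>R w", OF _ phi_has_derivative]) (auto intro!: derivative_eq_intros)
  have d2: "((\<lambda>\<tau>::real. D [w] (z + \<tau> *\<^sub>R w)) has_derivative (\<lambda>s. D [s *\<^sub>R w, w] (z + \<tau> *\<^sub>R w))) (at \<tau>)"
    by (rule has_derivative_compose[where g="D [w]" and f="\<lambda>\<tau>. z + \<tau> *\<^sub>R w", OF _ D1_has_derivative]) (auto intro!: derivative_eq_intros)
  have "((\<lambda>\<tau>::real. (\<phi> (z + \<tau> *\<^sub>R w) - y) \<bullet> (w + D [w] (z + \<tau> *\<^sub>R w))) has_derivative
     (\<lambda>s. (\<phi> (z + \<tau> *\<^sub>R w) - y) \<bullet> (D [s *\<^sub>R w, w] (z + \<tau> *\<^sub>R w)) + (s *\<^sub>R w + D [s *\<^sub>R w] (z + \<tau> *\<^sub>R w)) \<bullet> (w + D [w] (z + \<tau> *\<^sub>R w)))) (at \<tau>)"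
  proof (rule has_derivative_inner)
    show "((\<lambda>\<tau>::real. \<phi> (z + \<tau> *\<^sub>R w) - y) has_derivative (\<lambda>s. s *\<^sub>R w + D [s *\<^sub>R w] (z + \<tau> *\<^sub>R w))) (at \<tau>)"
      by (rule has_derivative_eq_rhs[OF has_derivative_diff[OF d1 has_derivative_const]]) simp
    show "((\<lambda>\<tau>::real. w + D [w] (z + \<tau> *\<^sub>R w)) has_derivative (\<lambda>s. D [s *\<^sub>R w, w] (z + \<tau> *\<^sub>R w))) (at \<tau>)"
      by (rule has_derivative_eq_rhs[OF has_derivative_add[OF has_derivative_const d2]]) simp
  qed
  then show ?thesis unfolding q_def power2_norm_eq_inner
    by (rule has_derivative_imp_has_field_derivative)
       (simp add: linear_cmul[OF l] linear_cmul[OF l2] inner_commute inner_add_right inner_add_left algebra_simps)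
qed

lemma isCont_D_comp [continuous_intros]: "isCont f x \<Longrightarrow> isCont (\<lambda>p. D vs (f p)) x"
  using isCont_o2[where f=f and a=x and g="D vs"] isCont_D by blast

lemma D1_orth:
  assumes z: "z \<in> T" and w: "w \<in> T" and u: "u \<in> T"
  shows "D [w] z \<bullet> u = 0"
proof -
  have l: "linear (\<lambda>h. D [h] z)" using linear_D[where vs="[]" and x=z] by simp
  have "((\<lambda>\<tau>::real. g (z + \<tau> *\<^sub>R w)) has_derivative (\<lambda>s. D [s *\<^sub>R w] (z + 0 *\<^sub>R w))) (at 0)"
    unfolding g_eq_D
    by (rule has_derivative_compose[where g="D []" and f="\<lambda>\<tau>. z + \<tau> *\<^sub>R w", OF _ Dd]) (auto intro!: derivative_eq_intros)
  then have "((\<lambda>\<tau>::real. g (z + \<tau> *\<^sub>R w) \<bullet> u) has_derivative (\<lambda>s. D [s *\<^sub>R w] z \<bullet> u)) (at 0)"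
    by (auto intro!: derivative_eq_intros)
  then have d1: "((\<lambda>\<tau>::real. g (z + \<tau> *\<^sub>R w) \<bullet> u) has_real_derivative (D [w] z \<bullet> u)) (at 0)"
    by (rule has_derivative_imp_has_field_derivative) (simp add: linear_cmul[OF l])
  have "(\<lambda>\<tau>::real. g (z + \<tau> *\<^sub>R w) \<bullet> u) = (\<lambda>_. 0)"
  proof
    fix \<tau> :: real
    have "z + \<tau> *\<^sub>R w \<in> T" using z w subT by (simp add: subspace_add subspace_scale)
    then show "g (z + \<tau> *\<^sub>R w) \<bullet> u = 0" using orthT u by blast
  qed
  then have d2: "((\<lambda>\<tau>::real. g (z + \<tau> *\<^sub>R w) \<bullet> u) has_real_derivative 0) (at 0)" by simp
  show ?thesis using DERIV_unique[OF d1 d2] .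
qed

lemma J_norm: assumes "w \<in> T" shows "(norm (J w))\<^sup>2 = (norm w)\<^sup>2 + (norm (D [w] 0))\<^sup>2"
proof -
  have "D [w] 0 \<bullet> w = 0" using D1_orth[of 0 w w] assms subT by (simp add: subspace_0)
  then show ?thesis unfolding J_def power2_norm_eq_inner by (simp add: inner_add_left inner_add_right inner_commute)
qed

lemma J_ge: "w \<in> T \<Longrightarrow> (norm w)\<^sup>2 \<le> (norm (J w))\<^sup>2" using J_norm by simp

lemma isCont_phi: "isCont \<phi> x" unfolding phi_eq_D by (intro continuous_intros)

lemma eventually_phi_line_in_U:
  assumes "\<phi> z \<in> U"
  shows "\<forall>\<^sub>F \<tau> in nhds (0::real). \<phi> (z + \<tau> *\<^sub>R u) \<in> U"
proof -
  have c: "isCont (\<lambda>\<tau>::real. \<phi> (z + \<tau> *\<^sub>R u)) 0"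
    using isCont_o2[where f="\<lambda>\<tau>::real. z + \<tau> *\<^sub>R u" and a=0 and g=\<phi>] isCont_phi by (auto intro!: continuous_intros)
  then have "((\<lambda>\<tau>::real. \<phi> (z + \<tau> *\<^sub>R u)) \<longlongrightarrow> \<phi> z) (at 0)" unfolding isCont_def by simp
  then have "\<forall>\<^sub>F \<tau> in at 0. \<phi> (z + \<tau> *\<^sub>R u) \<in> U" using openU assms by (rule topological_tendstoD)
  then show ?thesis using assms by (simp add: eventually_nhds_conv_at)
qed

lemma phi_in_M: "z \<in> T \<Longrightarrow> \<phi> z \<in> U \<Longrightarrow> \<phi> z \<in> M"
  using MU unfolding \<phi>_def by blast

lemma minimizer_critical:
  assumes z: "z \<in> T" and zU: "\<phi> z \<in> U" and xm: "is_minimizer M x (\<phi> z)" and u: "u \<in> T"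
  shows "(\<phi> z - x) \<bullet> (u + D [u] z) = 0"
proof -
  obtain e where e: "e > 0" "\<And>\<tau>. dist \<tau> 0 < e \<Longrightarrow> \<phi> (z + \<tau> *\<^sub>R u) \<in> U"
    using eventually_phi_line_in_U[OF zU, of u] unfolding eventually_nhds_metric by blast
  have "2 * ((\<phi> (z + 0 *\<^sub>R u) - x) \<bullet> (u + D [u] (z + 0 *\<^sub>R u))) = 0"
  proof (rule DERIV_local_min[OF sqdist_line_deriv e(1)], intro allI impI)
    fix \<tau> :: real assume "\<bar>0 - \<tau>\<bar> < e"
    then have "\<phi> (z + \<tau> *\<^sub>R u) \<in> U" using e by (auto simp: dist_real_def)
    moreover have "z + \<tau> *\<^sub>R u \<in> T" using z u subT by (simp add: subspace_add subspace_scale)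
    ultimately have "\<phi> (z + \<tau> *\<^sub>R u) \<in> M" by (rule phi_in_M[rotated])
    then show "(norm (\<phi> (z + 0 *\<^sub>R u) - x))\<^sup>2 \<le> (norm (\<phi> (z + \<tau> *\<^sub>R u) - x))\<^sup>2"
      using xm by (auto simp: is_minimizer_def)
  qed
  then show ?thesis by simp
qed

lemma q_expand: "q z y w = (norm (w + (\<Sum>i\<in>Basis. (w \<bullet> i) *\<^sub>R D [i] z)))\<^sup>2
   + (\<mu> + z + D [] z - y) \<bullet> (\<Sum>i\<in>Basis. (w \<bullet> i) *\<^sub>R (\<Sum>j\<in>Basis. (w \<bullet> j) *\<^sub>R D [j, i] z))"
  unfolding q_def by (simp only: D1_expand[where w=w] D2_expand phi_eq_D)

lemma q_cont: "continuous_on S (\<lambda>p. q (fst (fst p)) (snd (fst p)) (snd p))"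
  unfolding q_expand by (intro continuous_at_imp_continuous_on ballI continuous_intros)

lemma q_zero: "q z y 0 = 0" using q_scale[of z y 0 0] by simp

lemma q_nonneg_near:
  assumes pos: "\<forall>w\<in>T. w \<noteq> 0 \<longrightarrow> q 0 y0 w > 0"
  shows "\<exists>\<delta>>0. \<forall>z y w. norm z < \<delta> \<longrightarrow> dist y y0 < \<delta> \<longrightarrow> w \<in> T \<longrightarrow> q z y w \<ge> 0"
proof -
  define K where "K = T \<inter> sphere 0 1"
  have cK: "compact K" unfolding K_def
    by (rule closed_Int_compact) (auto simp: closed_subspace subT)
  have "\<exists>\<delta>>0. \<forall>p k. dist p (0, y0) < \<delta> \<longrightarrow> k \<in> K \<longrightarrow> (\<lambda>x. q (fst (fst x)) (snd (fst x)) (snd x)) (p, k) > 0"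
    by (rule compact_tube_pos[OF cK q_cont]) (use pos in \<open>auto simp: K_def\<close>)
  then obtain \<delta> where \<delta>: "\<delta> > 0" "\<And>p k. dist p (0, y0) < \<delta> \<Longrightarrow> k \<in> K \<Longrightarrow> q (fst p) (snd p) k > 0"
    by auto
  show ?thesis
  proof (intro exI[of _ "\<delta>/2"] conjI allI impI)
    fix z y w :: 'a assume z: "norm z < \<delta>/2" and y: "dist y y0 < \<delta>/2" and w: "w \<in> T"
    show "q z y w \<ge> 0"
    proof (cases "w = 0")
      case True then show ?thesis by (simp add: q_zero)
    next
      case False
      have "dist (z, y) (0, y0) \<le> dist z 0 + dist y y0"
        unfolding dist_Pair_Pair by (rule sqrt_sum_squares_le_sum) auto
      also have "\<dots> < \<delta>" using z y by simp
      finally have d: "dist (z, y) (0, y0) < \<delta>" .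
      have k: "(1 / norm w) *\<^sub>R w \<in> K" using False w subT by (auto simp: K_def subspace_scale)
      have "q z y ((1 / norm w) *\<^sub>R w) > 0" using \<delta>(2)[OF d k] by simp
      then have "(norm w)\<^sup>2 * q z y ((1 / norm w) *\<^sub>R w) \<ge> 0" by simp
      also have "(norm w)\<^sup>2 * q z y ((1 / norm w) *\<^sub>R w) = q z y w"
        using q_scale[of z y "1 / norm w" w] False by (simp add: power2_eq_square)
      finally show ?thesis .
    qed
  qed (use \<delta> in auto)
qed

lemma sqdist_line_cont: "continuous_on S (\<lambda>\<tau>::real. (norm (\<phi> (z + \<tau> *\<^sub>R w) - y))\<^sup>2)"
  by (rule continuous_at_imp_continuous_on) (blast intro: DERIV_isCont sqdist_line_deriv)

lemma sqdist_line_deriv_cont: "continuous_on S (\<lambda>\<tau>::real. (\<phi> (z + \<tau> *\<^sub>R w) - y) \<bullet> (w + D [w] (z + \<tau> *\<^sub>R w)))"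
  by (rule continuous_at_imp_continuous_on) (blast intro: DERIV_isCont sqdist_line_deriv2)

lemma sqdist_le_along_segment:
  assumes nn: "\<forall>s\<in>{0..1}. q (z + s *\<^sub>R w) y w \<ge> 0" and c0: "(\<phi> z - y) \<bullet> (w + D [w] z) = 0"
  shows "(norm (\<phi> z - y))\<^sup>2 \<le> (norm (\<phi> (z + w) - y))\<^sup>2"
proof -
  have p1: "(\<phi> (z + s *\<^sub>R w) - y) \<bullet> (w + D [w] (z + s *\<^sub>R w)) \<ge> 0" if s: "0 \<le> s" "s \<le> 1" for s
  proof -
    have "(\<lambda>\<tau>. (\<phi> (z + \<tau> *\<^sub>R w) - y) \<bullet> (w + D [w] (z + \<tau> *\<^sub>R w))) 0
        \<le> (\<lambda>\<tau>. (\<phi> (z + \<tau> *\<^sub>R w) - y) \<bullet> (w + D [w] (z + \<tau> *\<^sub>R w))) s"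
      by (rule DERIV_nonneg_imp_increasing_open[OF s(1)])
         (use nn s sqdist_line_deriv2 sqdist_line_deriv_cont in \<open>force+\<close>)
    then show ?thesis using c0 by simp
  qed
  have "(\<lambda>\<tau>. (norm (\<phi> (z + \<tau> *\<^sub>R w) - y))\<^sup>2) 0 \<le> (\<lambda>\<tau>. (norm (\<phi> (z + \<tau> *\<^sub>R w) - y))\<^sup>2) 1"
  proof (rule DERIV_nonneg_imp_increasing_open[of 0 1])
    fix x :: real assume "0 < x" "x < 1"
    then show "\<exists>y'. ((\<lambda>\<tau>. (norm (\<phi> (z + \<tau> *\<^sub>R w) - y))\<^sup>2) has_real_derivative y') (at x) \<and> 0 \<le> y'"
      using sqdist_line_deriv p1[of x] by force
  qed (auto intro: sqdist_line_cont)
  then show ?thesis by simp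
qed

lemma sqdist_less_along_segment:
  assumes neg: "\<forall>s\<in>{0..1}. q (z + s *\<^sub>R w) y w < 0" and c0: "(\<phi> z - y) \<bullet> (w + D [w] z) = 0"
  shows "(norm (\<phi> (z + w) - y))\<^sup>2 < (norm (\<phi> z - y))\<^sup>2"
proof -
  have p1: "(\<phi> (z + s *\<^sub>R w) - y) \<bullet> (w + D [w] (z + s *\<^sub>R w)) < 0" if s: "0 < s" "s \<le> 1" for s
  proof -
    have "(\<lambda>\<tau>. (\<phi> (z + \<tau> *\<^sub>R w) - y) \<bullet> (w + D [w] (z + \<tau> *\<^sub>R w))) s
        < (\<lambda>\<tau>. (\<phi> (z + \<tau> *\<^sub>R w) - y) \<bullet> (w + D [w] (z + \<tau> *\<^sub>R w))) 0"
      by (rule DERIV_neg_imp_decreasing[OF s(1)]) (use neg s sqdist_line_deriv2 in force)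
    then show ?thesis using c0 by simp
  qed
  have "(\<lambda>\<tau>. (norm (\<phi> (z + \<tau> *\<^sub>R w) - y))\<^sup>2) 1 < (\<lambda>\<tau>. (norm (\<phi> (z + \<tau> *\<^sub>R w) - y))\<^sup>2) 0"
  proof (rule DERIV_neg_imp_decreasing_open[of 0 1])
    fix x :: real assume "0 < x" "x < 1"
    then show "\<exists>y'. ((\<lambda>\<tau>. (norm (\<phi> (z + \<tau> *\<^sub>R w) - y))\<^sup>2) has_real_derivative y') (at x) \<and> y' < 0"
      using sqdist_line_deriv p1[of x] by force
  qed (auto intro: sqdist_line_cont)
  then show ?thesis by simp
qed

lemma minimizer_q_nonneg:
  assumes ym: "is_minimizer M y \<mu>" and w: "w \<in> T"
  shows "q 0 y w \<ge> 0"
proof (rule ccontr)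
  assume "\<not> q 0 y w \<ge> 0"
  then have neg: "q 0 y w < 0" by simp
  have "isCont (\<lambda>\<tau>::real. q (0 + \<tau> *\<^sub>R w) y w) 0" unfolding q_expand by (intro continuous_intros)
  then have "((\<lambda>\<tau>::real. q (0 + \<tau> *\<^sub>R w) y w) \<longlongrightarrow> q 0 y w) (at 0)" unfolding isCont_def by simp
  then have "\<forall>\<^sub>F \<tau> in at 0. q (0 + \<tau> *\<^sub>R w) y w < 0" using neg by (rule order_tendstoD)
  then have ev1: "\<forall>\<^sub>F \<tau> in nhds 0. q (0 + \<tau> *\<^sub>R w) y w < 0" using neg by (simp add: eventually_nhds_conv_at)
  have ev2: "\<forall>\<^sub>F \<tau> in nhds (0::real). \<phi> (0 + \<tau> *\<^sub>R w) \<in> U"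
    using eventually_phi_line_in_U[of 0 w] \<phi>0 \<mu>U by simp
  obtain e where e: "e > 0" "\<And>\<tau>. dist \<tau> 0 < e \<Longrightarrow> q (0 + \<tau> *\<^sub>R w) y w < 0 \<and> \<phi> (0 + \<tau> *\<^sub>R w) \<in> U"
    using eventually_conj[OF ev1 ev2] unfolding eventually_nhds_metric by blast
  define w' where "w' = (e / 2) *\<^sub>R w"
  have w'T: "w' \<in> T" using w subT by (simp add: w'_def subspace_scale)
  have "\<forall>s\<in>{0..1}. q (0 + s *\<^sub>R w') y w' < 0"
  proof
    fix s :: real assume "s \<in> {0..1}"
    then have "0 \<le> s * (e / 2)" "s * (e / 2) \<le> e / 2"
      using e(1) by (auto simp: mult_left_le_one_le)
    then have "q (0 + (s * (e / 2)) *\<^sub>R w) y w < 0" using e by (simp add: dist_real_def)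
    then show "q (0 + s *\<^sub>R w') y w' < 0" using e(1) by (simp add: w'_def q_scale mult_pos_neg)
  qed
  moreover have "(\<phi> 0 - y) \<bullet> (w' + D [w'] 0) = 0"
    using minimizer_critical[of 0 y w'] \<phi>0 \<mu>U ym w'T subT by (simp add: subspace_0)
  ultimately have "(norm (\<phi> (0 + w') - y))\<^sup>2 < (norm (\<mu> - y))\<^sup>2"
    using sqdist_less_along_segment \<phi>0 by metis
  moreover have "\<phi> (0 + w') \<in> M"
    using phi_in_M[of "0 + w'"] w'T e(2)[of "e / 2"] e(1) by (simp add: w'_def dist_real_def)
  ultimately show False using ym unfolding is_minimizer_def by (meson not_le)
qed

lemma D_line_deriv: "((\<lambda>s::real. D vs (p + s *\<^sub>R a) \<bullet> e) has_real_derivative (D (a # vs) (p + s *\<^sub>R a) \<bullet> e)) (at s)"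
proof -
  have l: "linear (\<lambda>h. D (h # vs) (p + s *\<^sub>R a))" by (rule linear_D)
  have "((\<lambda>s::real. D vs (p + s *\<^sub>R a)) has_derivative (\<lambda>s'. D (s' *\<^sub>R a # vs) (p + s *\<^sub>R a))) (at s)"
    by (rule has_derivative_compose[where g="D vs" and f="\<lambda>s. p + s *\<^sub>R a", OF _ Dd]) (auto intro!: derivative_eq_intros)
  then have "((\<lambda>s::real. D vs (p + s *\<^sub>R a) \<bullet> e) has_derivative (\<lambda>s'. D (s' *\<^sub>R a # vs) (p + s *\<^sub>R a) \<bullet> e)) (at s)"
    by (auto intro!: derivative_eq_intros)
  then show ?thesis
    by (rule has_derivative_imp_has_field_derivative) (simp add: linear_cmul[OF l])
qed

lemma D_second_difference:
  assumes h: "h > 0"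
  shows "\<exists>\<xi> \<eta>. 0 < \<xi> \<and> \<xi> < h \<and> 0 < \<eta> \<and> \<eta> < h \<and>
    D [] (z + h *\<^sub>R a + h *\<^sub>R b) \<bullet> e - D [] (z + h *\<^sub>R a) \<bullet> e - D [] (z + h *\<^sub>R b) \<bullet> e + D [] z \<bullet> e
     = h * (h * (D [b, a] (z + \<xi> *\<^sub>R a + \<eta> *\<^sub>R b) \<bullet> e))"
proof -
  define f1 where "f1 = (\<lambda>s::real. D [] ((z + h *\<^sub>R b) + s *\<^sub>R a) \<bullet> e - D [] (z + s *\<^sub>R a) \<bullet> e)"
  have d1: "(f1 has_real_derivative (D [a] ((z + h *\<^sub>R b) + s *\<^sub>R a) \<bullet> e - D [a] (z + s *\<^sub>R a) \<bullet> e)) (at s)" for s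
    unfolding f1_def by (intro DERIV_diff D_line_deriv)
  obtain \<xi> where \<xi>: "0 < \<xi>" "\<xi> < h"
    "f1 h - f1 0 = h * (D [a] ((z + h *\<^sub>R b) + \<xi> *\<^sub>R a) \<bullet> e - D [a] (z + \<xi> *\<^sub>R a) \<bullet> e)"
    using MVT2[OF h d1] by auto
  define f2 where "f2 = (\<lambda>\<tau>::real. D [a] ((z + \<xi> *\<^sub>R a) + \<tau> *\<^sub>R b) \<bullet> e)"
  have d2: "(f2 has_real_derivative (D [b, a] ((z + \<xi> *\<^sub>R a) + \<tau> *\<^sub>R b) \<bullet> e)) (at \<tau>)" for \<tau>
    unfolding f2_def using D_line_deriv[where vs="[a]"] by simp
  obtain \<eta> where \<eta>: "0 < \<eta>" "\<eta> < h" "f2 h - f2 0 = h * (D [b, a] ((z + \<xi> *\<^sub>R a) + \<eta> *\<^sub>R b) \<bullet> e)"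
    using MVT2[OF h d2] by auto
  have "f2 h - f2 0 = D [a] ((z + h *\<^sub>R b) + \<xi> *\<^sub>R a) \<bullet> e - D [a] (z + \<xi> *\<^sub>R a) \<bullet> e"
    unfolding f2_def by (simp add: algebra_simps)
  moreover have "f1 h - f1 0 = D [] (z + h *\<^sub>R a + h *\<^sub>R b) \<bullet> e - D [] (z + h *\<^sub>R a) \<bullet> e - D [] (z + h *\<^sub>R b) \<bullet> e + D [] z \<bullet> e"
    unfolding f1_def by (simp add: algebra_simps)
  ultimately have "D [] (z + h *\<^sub>R a + h *\<^sub>R b) \<bullet> e - D [] (z + h *\<^sub>R a) \<bullet> e - D [] (z + h *\<^sub>R b) \<bullet> e + D [] z \<bullet> e
     = h * (h * (D [b, a] ((z + \<xi> *\<^sub>R a) + \<eta> *\<^sub>R b) \<bullet> e))"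
    using \<xi>(3) \<eta>(3) by simp
  then show ?thesis using \<xi>(1,2) \<eta>(1,2) by blast
qed

lemma D_near:
  assumes "r > 0"
  shows "\<exists>d>0. \<forall>p. norm (p - z) < d \<longrightarrow> \<bar>D vs p \<bullet> e - D vs z \<bullet> e\<bar> < r"
proof -
  have "isCont (\<lambda>p. D vs p \<bullet> e) z" by (intro continuous_intros)
  then show ?thesis using assms unfolding continuous_at_eps_delta by (simp add: dist_norm dist_real_def)
qed

lemma D2_sym: "D [a, b] z = D [b, a] z"
proof -
  have "D [b, a] z \<bullet> e = D [a, b] z \<bullet> e" for e
  proof (rule ccontr)
    assume "D [b, a] z \<bullet> e \<noteq> D [a, b] z \<bullet> e"
    then have c: "\<bar>D [b, a] z \<bullet> e - D [a, b] z \<bullet> e\<bar> / 2 > 0" by simp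
    obtain d1 where d1: "d1 > 0"
      "\<And>p. norm (p - z) < d1 \<Longrightarrow> \<bar>D [b, a] p \<bullet> e - D [b, a] z \<bullet> e\<bar> < \<bar>D [b, a] z \<bullet> e - D [a, b] z \<bullet> e\<bar> / 2"
      using D_near[OF c] by blast
    obtain d2 where d2: "d2 > 0"
      "\<And>p. norm (p - z) < d2 \<Longrightarrow> \<bar>D [a, b] p \<bullet> e - D [a, b] z \<bullet> e\<bar> < \<bar>D [b, a] z \<bullet> e - D [a, b] z \<bullet> e\<bar> / 2"
      using D_near[OF c] by blast
    define h where "h = min d1 d2 / (norm a + norm b + 1)"
    have h: "h > 0" unfolding h_def using d1(1) d2(1) by (simp add: add_nonneg_pos)
    have n: "norm a + norm b + 1 > 0" by (simp add: add_nonneg_pos)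
    have "h * (norm a + norm b) < h * (norm a + norm b + 1)" using h by simp
    also have "\<dots> = min d1 d2" unfolding h_def using n by simp
    finally have hb: "h * (norm a + norm b) < min d1 d2" .
    have close: "norm ((z + x *\<^sub>R u + y *\<^sub>R v) - z) < min d1 d2"
      if "0 < x" "x < h" "0 < y" "y < h" "norm u + norm v = norm a + norm b" for x y u v
    proof -
      have "norm ((z + x *\<^sub>R u + y *\<^sub>R v) - z) \<le> x * norm u + y * norm v"
        using that norm_triangle_ineq[of "x *\<^sub>R u" "y *\<^sub>R v"] by simp
      also have "\<dots> \<le> h * norm u + h * norm v" using that by (intro add_mono mult_right_mono) auto
      also have "\<dots> = h * (norm a + norm b)" using that(5) by (simp add: distrib_left[symmetric])
      finally show ?thesis using hb by simp
    qed
    obtain \<xi> \<eta> where r1: "0 < \<xi>" "\<xi> < h" "0 < \<eta>" "\<eta> < h"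
      "D [] (z + h *\<^sub>R a + h *\<^sub>R b) \<bullet> e - D [] (z + h *\<^sub>R a) \<bullet> e - D [] (z + h *\<^sub>R b) \<bullet> e + D [] z \<bullet> e
       = h * (h * (D [b, a] (z + \<xi> *\<^sub>R a + \<eta> *\<^sub>R b) \<bullet> e))"
      using D_second_difference[OF h, of z a b e] by blast
    obtain \<xi>' \<eta>' where r2: "0 < \<xi>'" "\<xi>' < h" "0 < \<eta>'" "\<eta>' < h"
      "D [] (z + h *\<^sub>R b + h *\<^sub>R a) \<bullet> e - D [] (z + h *\<^sub>R b) \<bullet> e - D [] (z + h *\<^sub>R a) \<bullet> e + D [] z \<bullet> e
       = h * (h * (D [a, b] (z + \<xi>' *\<^sub>R b + \<eta>' *\<^sub>R a) \<bullet> e))"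
      using D_second_difference[OF h, of z b a e] by blast
    have "h * (h * (D [b, a] (z + \<xi> *\<^sub>R a + \<eta> *\<^sub>R b) \<bullet> e)) = h * (h * (D [a, b] (z + \<xi>' *\<^sub>R b + \<eta>' *\<^sub>R a) \<bullet> e))"
      using r1(5) r2(5) by (simp add: algebra_simps)
    then have "D [b, a] (z + \<xi> *\<^sub>R a + \<eta> *\<^sub>R b) \<bullet> e = D [a, b] (z + \<xi>' *\<^sub>R b + \<eta>' *\<^sub>R a) \<bullet> e"
      using h by simp
    moreover have "\<bar>D [b, a] (z + \<xi> *\<^sub>R a + \<eta> *\<^sub>R b) \<bullet> e - D [b, a] z \<bullet> e\<bar> < \<bar>D [b, a] z \<bullet> e - D [a, b] z \<bullet> e\<bar> / 2"
      using d1(2) close[of \<xi> \<eta> a b] r1 by simp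
    moreover have "\<bar>D [a, b] (z + \<xi>' *\<^sub>R b + \<eta>' *\<^sub>R a) \<bullet> e - D [a, b] z \<bullet> e\<bar> < \<bar>D [b, a] z \<bullet> e - D [a, b] z \<bullet> e\<bar> / 2"
      using d2(2) close[of \<xi>' \<eta>' b a] r2 by (simp add: add.commute)
    moreover have "\<And>X Y A B :: real. X = Y \<Longrightarrow> \<bar>X - A\<bar> < \<bar>A - B\<bar> / 2 \<Longrightarrow> \<bar>Y - B\<bar> < \<bar>A - B\<bar> / 2 \<Longrightarrow> False"
      by (simp add: abs_if split: if_split_asm)
    ultimately show False by blast
  qed
  then have "(D [a, b] z - D [b, a] z) \<bullet> (D [a, b] z - D [b, a] z) = 0"
    by (simp add: inner_diff_left)
  then show ?thesis by simp
qed

definition \<beta> where "\<beta> y v w = (J v) \<bullet> (J w) + (\<mu> - y) \<bullet> D [v, w] 0"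

lemma q0_beta: "q 0 y w = \<beta> y w w"
  unfolding q_def \<beta>_def J_def \<phi>0 power2_norm_eq_inner by simp

lemma beta_sym: "\<beta> y v w = \<beta> y w v"
  unfolding \<beta>_def by (simp add: D2_sym[of v w] inner_commute)

lemma J_add: "J (a + b) = J a + J b"
  unfolding J_def using linear_add[OF linear_D[where vs="[]" and x=0]] by simp
lemma J_scale: "J (s *\<^sub>R a) = s *\<^sub>R J a"
  unfolding J_def using linear_cmul[OF linear_D[where vs="[]" and x=0]] by (simp add: scaleR_add_right)

lemma beta_add1: "\<beta> y (a + b) w = \<beta> y a w + \<beta> y b w"
  unfolding \<beta>_def J_add using linear_add[OF linear_D[where vs="[w]" and x=0]]
  by (simp add: inner_add_left inner_add_right)
lemma beta_scale1: "\<beta> y (s *\<^sub>R a) w = s * \<beta> y a w"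
  unfolding \<beta>_def J_scale using linear_cmul[OF linear_D[where vs="[w]" and x=0]]
  by (simp add: algebra_simps)
lemma beta_add2: "\<beta> y w (a + b) = \<beta> y w a + \<beta> y w b"
  using beta_add1 beta_sym by metis
lemma beta_scale2: "\<beta> y w (s *\<^sub>R a) = s * \<beta> y w a"
  using beta_scale1 beta_sym by metis

lemma q_add_scaled: "q 0 y (v + s *\<^sub>R w) = q 0 y v + 2 * s * \<beta> y v w + s\<^sup>2 * q 0 y w"
  unfolding q0_beta beta_add1 beta_add2 beta_scale1 beta_scale2
  by (simp add: beta_sym[of y w v] power2_eq_square algebra_simps)

lemma second_deriv_at_chart: "second_deriv_at (\<lambda>v. (norm (\<mu> + v + g v - y))\<^sup>2) 0 (\<lambda>v w. 2 * \<beta> y v w)"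
  unfolding second_deriv_at_def
proof (intro exI conjI allI)
  let ?f' = "\<lambda>z w. 2 * ((\<phi> z - y) \<bullet> (w + D [w] z))"
  show "\<forall>\<^sub>F z in nhds 0. ((\<lambda>v. (norm (\<mu> + v + g v - y))\<^sup>2) has_derivative ?f' z) (at z)"
  proof (rule always_eventually, rule allI)
    fix z :: 'a
    have e: "(\<lambda>v. (norm (\<mu> + v + g v - y))\<^sup>2) = (\<lambda>v. (\<phi> v - y) \<bullet> (\<phi> v - y))"
      by (auto simp: \<phi>_def power2_norm_eq_inner)
    have "((\<lambda>v. (\<phi> v - y) \<bullet> (\<phi> v - y)) has_derivative
          (\<lambda>h. (\<phi> z - y) \<bullet> (h + D [h] z) + (h + D [h] z) \<bullet> (\<phi> z - y))) (at z)"
      by (rule has_derivative_inner) (rule has_derivative_eq_rhs[OF has_derivative_diff[OF phi_has_derivative has_derivative_const]], simp)+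
    then show "((\<lambda>v. (norm (\<mu> + v + g v - y))\<^sup>2) has_derivative ?f' z) (at z)"
      unfolding e by (rule has_derivative_eq_rhs) (auto simp: inner_commute)
  qed
  fix w :: 'a
  have "((\<lambda>z. (\<phi> z - y) \<bullet> (w + D [w] z)) has_derivative
        (\<lambda>v. (\<phi> 0 - y) \<bullet> D [v, w] 0 + (v + D [v] 0) \<bullet> (w + D [w] 0))) (at 0)"
  proof (rule has_derivative_inner)
    show "((\<lambda>z. \<phi> z - y) has_derivative (\<lambda>h. h + D [h] 0)) (at 0)"
      by (rule has_derivative_eq_rhs[OF has_derivative_diff[OF phi_has_derivative has_derivative_const]]) simp
    show "((\<lambda>z. w + D [w] z) has_derivative (\<lambda>v. D [v, w] 0)) (at 0)"
      by (rule has_derivative_eq_rhs[OF has_derivative_add[OF has_derivative_const D1_has_derivative]]) simp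
  qed
  then show "((\<lambda>z. ?f' z w) has_derivative (\<lambda>v. 2 * \<beta> y v w)) (at 0)"
    unfolding \<beta>_def J_def \<phi>0
    by (intro has_derivative_eq_rhs[OF has_derivative_mult_right]) (auto simp: algebra_simps)
qed

lemma q_pos_if_nondegenerate:
  assumes ym: "is_minimizer M y \<mu>" and nd: "\<not> degenerate_hessian M y \<mu>"
  shows "\<forall>w\<in>T. w \<noteq> 0 \<longrightarrow> q 0 y w > 0"
proof (intro ballI impI)
  fix v assume v: "v \<in> T" "v \<noteq> 0"
  show "q 0 y v > 0"
  proof (rule ccontr)
    assume "\<not> q 0 y v > 0"
    then have z: "q 0 y v = 0" using minimizer_q_nonneg[OF ym v(1)] by simp
    have "2 * \<beta> y v w = 0" if w: "w \<in> T" for w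
    proof -
      have "2 * s * \<beta> y v w + s\<^sup>2 * q 0 y w \<ge> 0" for s
      proof -
        have "v + s *\<^sub>R w \<in> T" using v w subT by (simp add: subspace_add subspace_scale)
        then have "q 0 y (v + s *\<^sub>R w) \<ge> 0" by (rule minimizer_q_nonneg[OF ym])
        then show ?thesis using q_add_scaled[of y v s w] z by simp
      qed
      then have "\<beta> y v w = 0" by (rule linear_coeff_zero_if_quadratic_nonneg[OF minimizer_q_nonneg[OF ym w]])
      then show ?thesis by simp
    qed
    then have "degenerate_hessian M y \<mu>"
      unfolding degenerate_hessian_def using ch second_deriv_at_chart[of y] v by blast
    then show False using nd by simp
  qed
qed

text \<open>\<open>ray_params\<close> is the set of \<open>l \<ge> 1\<close> for which \<open>\<mu>\<close> is still a nearest point of \<open>ray l\<close>;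
  the segment of the normal ray it describes ends in the cutlocus, if it ends at all.\<close>
definition ray :: "real \<Rightarrow> 'a" where "ray l = \<mu> + l *\<^sub>R (t - \<mu>)"
definition ray_params where "ray_params = {l. 1 \<le> l \<and> is_minimizer M (ray l) \<mu>}"

lemma ray_one: "ray 1 = t" by (simp add: ray_def)

lemma sqdist_ray_diff: "(norm (m - ray l))\<^sup>2 - (norm (\<mu> - ray l))\<^sup>2 = (norm (m - \<mu>))\<^sup>2 - 2 * l * ((m - \<mu>) \<bullet> (t - \<mu>))"
proof -
  have "m - ray l = (m - \<mu>) - l *\<^sub>R (t - \<mu>)" "\<mu> - ray l = - (l *\<^sub>R (t - \<mu>))" by (auto simp: ray_def algebra_simps)
  then show ?thesis using norm_diff_square[of "m - \<mu>" "l *\<^sub>R (t - \<mu>)"] by (simp only:) (simp add: power_mult_distrib)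
qed

lemma minimizer_ray_iff: "is_minimizer M (ray l) \<mu> \<longleftrightarrow> (\<forall>m\<in>M. 2 * l * ((m - \<mu>) \<bullet> (t - \<mu>)) \<le> (norm (m - \<mu>))\<^sup>2)"
proof -
  have "is_minimizer M (ray l) \<mu> \<longleftrightarrow> (\<forall>m\<in>M. (norm (m - ray l))\<^sup>2 - (norm (\<mu> - ray l))\<^sup>2 \<ge> 0)"
    using \<mu>M by (auto simp: is_minimizer_def)
  then show ?thesis unfolding sqdist_ray_diff by simp
qed

lemma minimizer_ray_mono:
  assumes "is_minimizer M (ray l) \<mu>" "0 \<le> l'" "l' \<le> l"
  shows "is_minimizer M (ray l') \<mu>"
  unfolding minimizer_ray_iff
proof
  fix m assume m: "m \<in> M"
  have a: "2 * l * ((m - \<mu>) \<bullet> (t - \<mu>)) \<le> (norm (m - \<mu>))\<^sup>2" using assms(1) m minimizer_ray_iff by blast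
  show "2 * l' * ((m - \<mu>) \<bullet> (t - \<mu>)) \<le> (norm (m - \<mu>))\<^sup>2"
  proof (cases "(m - \<mu>) \<bullet> (t - \<mu>) \<le> 0")
    case True
    then have "2 * l' * ((m - \<mu>) \<bullet> (t - \<mu>)) \<le> 0" using assms(2) by (simp add: mult_nonneg_nonpos)
    then show ?thesis by (smt (verit) zero_le_power2)
  next
    case False
    then have "2 * l' * ((m - \<mu>) \<bullet> (t - \<mu>)) \<le> 2 * l * ((m - \<mu>) \<bullet> (t - \<mu>))" using assms(3) by simp
    then show ?thesis using a by linarith
  qed
qed

lemma one_in_ray_params: "1 \<in> ray_params" using tmin by (simp add: ray_params_def ray_one)

lemma closed_ray_params: "closed ray_params"
proof -
  have "ray_params = {l. 1 \<le> l} \<inter> (\<Inter>m\<in>M. {l. 2 * l * ((m - \<mu>) \<bullet> (t - \<mu>)) \<le> (norm (m - \<mu>))\<^sup>2})"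
    unfolding ray_params_def minimizer_ray_iff by auto
  also have "closed \<dots>"
    by (intro closed_Int closed_INT ballI closed_Collect_le continuous_intros continuous_on_const) 
  finally show ?thesis .
qed

lemma q_ray_affine: "q 0 (ray l) w = (1 - l) * (norm (J w))\<^sup>2 + l * q 0 t w"
proof -
  show ?thesis unfolding q_def \<phi>0 J_def[symmetric] ray_def
    by (simp add: algebra_simps inner_diff_left inner_add_left)
qed
lemma chart_coordinate:
  assumes "m \<in> M" "m \<in> U"
  shows "\<exists>v\<in>T. m = \<phi> v \<and> norm v \<le> norm (m - \<mu>)"
proof -
  have "m \<in> {\<mu> + v + g v | v. v \<in> T}" using assms MU by blast
  then obtain v where v: "v \<in> T" "m = \<mu> + v + g v" by blast
  have "(norm (m - \<mu>))\<^sup>2 = (norm v)\<^sup>2 + (norm (g v))\<^sup>2"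
    using orthT[OF v(1) v(1)] v(2) unfolding power2_norm_eq_inner
    by (simp add: inner_add_left inner_add_right inner_commute)
  then have "(norm v)\<^sup>2 \<le> (norm (m - \<mu>))\<^sup>2" by simp
  then have "norm v \<le> norm (m - \<mu>)" by (simp add: power2_le_iff_abs_le)
  then show ?thesis using v by (auto simp: \<phi>_def)
qed

lemma ball_in_U:
  assumes "\<delta> > 0"
  obtains \<rho> where "\<rho> > 0" "\<rho> \<le> \<delta>" "ball \<mu> \<rho> \<subseteq> U"
proof -
  obtain \<rho>U where "\<rho>U > 0" "ball \<mu> \<rho>U \<subseteq> U" using openU \<mu>U open_contains_ball by blast
  then show ?thesis using assms by (intro that[of "min \<delta> \<rho>U"]) auto
qed

text \<open>Where \<open>q\<close> is nonnegative, the squared distance to \<open>y\<close> is convex along chart segments, so a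
  critical point of it that also beats every point of \<open>M\<close> outside a small ball is a minimizer.\<close>
lemma minimizer_from_local_convexity:
  assumes q_nonneg: "\<And>z y' w. norm z < \<delta> \<Longrightarrow> dist y' y0 < \<delta> \<Longrightarrow> w \<in> T \<Longrightarrow> q z y' w \<ge> 0"
    and \<rho>: "\<rho> \<le> \<delta>" "ball \<mu> \<rho> \<subseteq> U" and y: "dist y y0 < \<delta>"
    and v: "v \<in> T" "norm v < \<delta>" "\<phi> v \<in> M"
    and crit: "\<And>u. u \<in> T \<Longrightarrow> (\<phi> v - y) \<bullet> (u + D [u] v) = 0"
    and far: "\<And>m'. m' \<in> M \<Longrightarrow> m' \<notin> ball \<mu> \<rho> \<Longrightarrow> norm (\<phi> v - y) \<le> norm (m' - y)"
  shows "is_minimizer M y (\<phi> v)"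
  unfolding is_minimizer_def
proof (intro conjI ballI)
  show "\<phi> v \<in> M" by (rule v(3))
  fix m' assume m'M: "m' \<in> M"
  show "(norm (\<phi> v - y))\<^sup>2 \<le> (norm (m' - y))\<^sup>2"
  proof (cases "m' \<in> ball \<mu> \<rho>")
    case False
    then show ?thesis using far[OF m'M] by (simp add: power_mono)
  next
    case True
    then obtain v' where v': "v' \<in> T" "m' = \<phi> v'" "norm v' \<le> norm (m' - \<mu>)"
      using chart_coordinate[OF m'M] \<rho>(2) by blast
    have nv': "norm v' < \<delta>" using v'(3) True \<rho>(1) by (simp add: dist_norm norm_minus_commute)
    have w: "v' - v \<in> T" using v v' subT by (simp add: subspace_diff)
    have "q (v + s *\<^sub>R (v' - v)) y (v' - v) \<ge> 0" if s: "s \<in> {0..1}" for s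
    proof (rule q_nonneg[OF _ y w])
      have "v + s *\<^sub>R (v' - v) = (1 - s) *\<^sub>R v + s *\<^sub>R v'" by (simp add: algebra_simps)
      then have "norm (v + s *\<^sub>R (v' - v)) \<le> (1 - s) * norm v + s * norm v'"
        using norm_triangle_ineq[of "(1 - s) *\<^sub>R v" "s *\<^sub>R v'"] s by simp
      also have "\<dots> < \<delta>" using convex_bound_lt[OF v(2) nv', of "1 - s" s] s by simp
      finally show "norm (v + s *\<^sub>R (v' - v)) < \<delta>" .
    qed
    then have "(norm (\<phi> v - y))\<^sup>2 \<le> (norm (\<phi> (v + (v' - v)) - y))\<^sup>2"
      using sqdist_le_along_segment crit[OF w] by blast
    then show ?thesis using v'(2) by simp
  qed
qed

lemma minimizers_near:
  assumes uniq: "\<And>m. is_minimizer M t m \<Longrightarrow> m = \<mu>" and e: "e > 0"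
  shows "\<exists>\<delta>>0. \<forall>x m. dist x t < \<delta> \<longrightarrow> is_minimizer M x m \<longrightarrow> dist m \<mu> < e"
proof -
  have "compact (M - ball \<mu> e)" using cM by (simp add: compact_diff)
  moreover have "norm (\<mu> - t) < norm (m - t)" if "m \<in> M - ball \<mu> e" for m
    using unique_minimizer_strict[OF tmin uniq] e that by force
  ultimately obtain \<delta> where \<delta>: "\<delta> > 0"
    "\<And>x m. dist x t < \<delta> \<Longrightarrow> m \<in> M - ball \<mu> e \<Longrightarrow> norm (\<mu> - x) < norm (m - x)"
    using strictly_nearer_persists[of "M - ball \<mu> e" "\<lambda>x. x" "\<lambda>_. \<mu>" t]
    by (metis continuous_on_id continuous_on_const)
  show ?thesis
  proof (intro exI[of _ \<delta>] conjI allI impI)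
    fix x m assume x: "dist x t < \<delta>" and xm: "is_minimizer M x m"
    show "dist m \<mu> < e"
    proof (rule ccontr)
      assume "\<not> dist m \<mu> < e"
      then have "norm (\<mu> - x) < norm (m - x)" using \<delta>(2)[OF x] xm by (auto simp: is_minimizer_def dist_commute)
      moreover have "(norm (m - x))\<^sup>2 \<le> (norm (\<mu> - x))\<^sup>2" using xm \<mu>M by (simp add: is_minimizer_def)
      ultimately show False by (simp add: not_le[symmetric] power_mono)
    qed
  qed (use \<delta> in auto)
qed

lemma ray_params_extend:
  assumes l1: "l1 \<in> ray_params" and nc: "ray l1 \<notin> cutlocus M"
  shows "\<exists>l\<in>ray_params. l > l1"
proof -
  have ym1: "is_minimizer M (ray l1) \<mu>" and l1ge: "1 \<le> l1" using l1 by (auto simp: ray_params_def)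
  have uniq: "\<And>m. is_minimizer M (ray l1) m \<Longrightarrow> m = \<mu>"
    and nd: "\<not> degenerate_hessian M (ray l1) \<mu>" using nc ym1 unfolding cutlocus_def by blast+
  obtain \<delta> where \<delta>: "\<delta> > 0"
    "\<And>z y w. norm z < \<delta> \<Longrightarrow> dist y (ray l1) < \<delta> \<Longrightarrow> w \<in> T \<Longrightarrow> q z y w \<ge> 0"
    using q_nonneg_near[OF q_pos_if_nondegenerate[OF ym1 nd]] by blast
  obtain \<rho> where \<rho>: "\<rho> > 0" "\<rho> \<le> \<delta>" "ball \<mu> \<rho> \<subseteq> U" using ball_in_U[OF \<delta>(1)] .
  have "compact (M - ball \<mu> \<rho>)" using cM by (simp add: compact_diff)
  moreover have "continuous_on UNIV ray" unfolding ray_def by (intro continuous_intros)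
  moreover have "norm (\<mu> - ray l1) < norm (m - ray l1)" if "m \<in> M - ball \<mu> \<rho>" for m
    using unique_minimizer_strict[OF ym1 uniq] \<rho>(1) that by force
  ultimately obtain \<delta>' where \<delta>': "\<delta>' > 0"
    "\<And>l m. dist l l1 < \<delta>' \<Longrightarrow> m \<in> M - ball \<mu> \<rho> \<Longrightarrow> norm (\<mu> - ray l) < norm (m - ray l)"
    using strictly_nearer_persists[of "M - ball \<mu> \<rho>" ray "\<lambda>_. \<mu>" l1]
    by (metis continuous_on_const)
  define \<epsilon> where "\<epsilon> = min (\<delta>'/2) (\<delta> / (2 * (norm (t - \<mu>) + 1)))"
  have \<epsilon>: "\<epsilon> > 0" "\<epsilon> < \<delta>'" using \<delta> \<delta>' by (auto simp: \<epsilon>_def add_nonneg_pos)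
  have c: "0 < 2 * (norm (t - \<mu>) + 1)" by (simp add: add_nonneg_pos)
  have "\<epsilon> \<le> \<delta> / (2 * (norm (t - \<mu>) + 1))" unfolding \<epsilon>_def by (rule min.cobounded2)
  then have "\<epsilon> * (2 * (norm (t - \<mu>) + 1)) \<le> \<delta>" by (simp only: pos_le_divide_eq[OF c])
  then have "\<epsilon> * norm (t - \<mu>) < \<delta>" using \<epsilon> \<delta> by (simp add: algebra_simps)
  moreover have "ray (l1 + \<epsilon>) - ray l1 = \<epsilon> *\<^sub>R (t - \<mu>)" by (simp add: ray_def algebra_simps)
  ultimately have dy: "dist (ray (l1 + \<epsilon>)) (ray l1) < \<delta>" using \<epsilon> by (simp add: dist_norm)
  have crit0: "(\<phi> 0 - ray (l1 + \<epsilon>)) \<bullet> (u + D [u] 0) = 0" if "u \<in> T" for u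
  proof -
    have "(\<phi> 0 - t) \<bullet> (u + D [u] 0) = 0"
      using minimizer_critical[of 0 t u] \<phi>0 \<mu>U tmin that subT by (simp add: subspace_0)
    moreover have "\<phi> 0 - ray (l1 + \<epsilon>) = (l1 + \<epsilon>) *\<^sub>R (\<phi> 0 - t)" by (simp add: \<phi>0 ray_def algebra_simps)
    ultimately show ?thesis by simp
  qed
  have far0: "norm (\<phi> 0 - ray (l1 + \<epsilon>)) \<le> norm (m - ray (l1 + \<epsilon>))"
    if "m \<in> M" "m \<notin> ball \<mu> \<rho>" for m
    using \<delta>'(2)[of "l1 + \<epsilon>" m] that \<epsilon> \<phi>0 by (simp add: dist_real_def)
  have "is_minimizer M (ray (l1 + \<epsilon>)) (\<phi> 0)"
    using subT \<delta>(1) \<phi>0 \<mu>M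
    by (intro minimizer_from_local_convexity[OF \<delta>(2) \<rho>(2,3) dy _ _ _ crit0 far0]) (auto simp: subspace_0)
  then have "l1 + \<epsilon> \<in> ray_params" using l1ge \<epsilon> \<phi>0 by (simp add: ray_params_def)
  then show ?thesis using \<epsilon> by (intro bexI[of _ "l1 + \<epsilon>"]) auto
qed
lemma ray_params_Sup_in_cutlocus:
  assumes tnc: "t \<notin> cutlocus M" and bdd: "bdd_above ray_params"
  shows "\<exists>l1. l1 \<in> ray_params \<and> l1 > 1 \<and> ray l1 \<in> cutlocus M"
proof -
  define l1 where "l1 = Sup ray_params"
  have ne: "ray_params \<noteq> {}" using one_in_ray_params by blast
  have l1L: "l1 \<in> ray_params" unfolding l1_def by (rule closed_contains_Sup[OF ne bdd closed_ray_params])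
  have inC: "ray l1 \<in> cutlocus M"
  proof (rule ccontr)
    assume "ray l1 \<notin> cutlocus M"
    then obtain l where "l \<in> ray_params" "l > l1" using ray_params_extend[OF l1L] by blast
    moreover have "l \<le> l1" unfolding l1_def using \<open>l \<in> ray_params\<close> bdd by (rule cSup_upper)
    ultimately show False by simp
  qed
  have "l1 \<ge> 1" using l1L by (simp add: ray_params_def)
  moreover have "l1 \<noteq> 1" using inC tnc ray_one by auto
  ultimately show ?thesis using l1L inC by auto
qed

lemma ray_params_unbounded:
  assumes nb: "\<not> bdd_above ray_params" and l: "l \<ge> 1"
  shows "l \<in> ray_params"
proof -
  obtain l' where l': "l' \<in> ray_params" "l' > l" using nb unfolding bdd_above_def by (meson not_le)
  then have "is_minimizer M (ray l') \<mu>" by (simp add: ray_params_def)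
  then have "is_minimizer M (ray l) \<mu>" by (rule minimizer_ray_mono) (use l l' in auto)
  then show ?thesis using l by (simp add: ray_params_def)
qed

lemma q_lower_bound_from_ray:
  assumes "l \<in> ray_params" "w \<in> T"
  shows "q 0 t w \<ge> (1 - 1/l) * (norm (J w))\<^sup>2"
proof -
  have l1: "l \<ge> 1" and ym: "is_minimizer M (ray l) \<mu>" using assms by (auto simp: ray_params_def)
  have "0 \<le> q 0 (ray l) w" by (rule minimizer_q_nonneg[OF ym assms(2)])
  also have "\<dots> = (1 - l) * (norm (J w))\<^sup>2 + l * q 0 t w" by (rule q_ray_affine)
  finally have "l * q 0 t w \<ge> (l - 1) * (norm (J w))\<^sup>2" by (simp add: algebra_simps)
  then have "q 0 t w \<ge> ((l - 1) * (norm (J w))\<^sup>2) / l" using l1 by (simp add: divide_le_eq mult.commute)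
  moreover have "((l - 1) * (norm (J w))\<^sup>2) / l = (1 - 1/l) * (norm (J w))\<^sup>2" using l1 by (simp add: field_simps)
  ultimately show ?thesis by simp
qed
lemma q_lower_bound_unbounded:
  assumes nb: "\<not> bdd_above ray_params" and w: "w \<in> T"
  shows "q 0 t w \<ge> (norm (J w))\<^sup>2"
proof (rule ccontr)
  assume "\<not> q 0 t w \<ge> (norm (J w))\<^sup>2"
  then have c: "(norm (J w))\<^sup>2 - q 0 t w > 0" by simp
  define l where "l = (norm (J w))\<^sup>2 / ((norm (J w))\<^sup>2 - q 0 t w) + 1"
  have l1: "l \<ge> 1" using c by (simp add: l_def)
  have "q 0 t w \<ge> (1 - 1/l) * (norm (J w))\<^sup>2" using q_lower_bound_from_ray[OF ray_params_unbounded[OF nb l1] w] .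
  then have "(norm (J w))\<^sup>2 - q 0 t w \<le> (norm (J w))\<^sup>2 / l" by (simp add: algebra_simps)
  also have "\<dots> < (norm (J w))\<^sup>2 - q 0 t w"
  proof -
    define a where "a = (norm (J w))\<^sup>2"
    define c' where "c' = (norm (J w))\<^sup>2 - q 0 t w"
    have a: "a \<ge> 0" and c': "c' > 0" using c by (auto simp: a_def c'_def)
    have "a / (a / c' + 1) < c'"
    proof -
      have p: "a / c' + 1 > 0" using a c' by (simp add: add_nonneg_pos)
      have "a < c' * (a / c' + 1)" using c' by (simp add: distrib_left)
      then show ?thesis using p by (simp add: divide_less_eq mult.commute)
    qed
    then show ?thesis by (simp add: l_def a_def c'_def)
  qed
  finally show False by simp
qed

lemma ray_strictly_nearer_below:
  assumes l: "l \<in> ray_params" "0 \<le> l'" "l' < l" and m: "m \<in> M" "m \<noteq> \<mu>"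
  shows "norm (\<mu> - ray l') < norm (m - ray l')"
proof -
  have a: "2 * l * ((m - \<mu>) \<bullet> (t - \<mu>)) \<le> (norm (m - \<mu>))\<^sup>2"
    using l(1) m(1) unfolding ray_params_def minimizer_ray_iff by blast
  have "2 * l' * ((m - \<mu>) \<bullet> (t - \<mu>)) < (norm (m - \<mu>))\<^sup>2"
  proof (cases "(m - \<mu>) \<bullet> (t - \<mu>) \<le> 0")
    case True
    then have "2 * l' * ((m - \<mu>) \<bullet> (t - \<mu>)) \<le> 0" using l(2) by (simp add: mult_nonneg_nonpos)
    moreover have "(norm (m - \<mu>))\<^sup>2 > 0" using m(2) by simp
    ultimately show ?thesis by linarith
  next
    case False
    then have "2 * l' * ((m - \<mu>) \<bullet> (t - \<mu>)) < 2 * l * ((m - \<mu>) \<bullet> (t - \<mu>))" using l(3) by simp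
    then show ?thesis using a by linarith
  qed
  then have "(norm (\<mu> - ray l'))\<^sup>2 < (norm (m - ray l'))\<^sup>2" using sqdist_ray_diff[of m l'] by simp
  then show ?thesis by (simp add: power_less_imp_less_base)
qed

lemma q_pos_below:
  assumes l2: "l2 \<in> ray_params" and l: "1 < l" "l < l2" and w: "w \<in> T" "w \<noteq> 0"
  shows "q 0 (ray l) w > 0"
proof -
  have "q 0 (ray l) w = (1 - l) * (norm (J w))\<^sup>2 + l * q 0 t w" by (rule q_ray_affine)
  also have "\<dots> \<ge> (1 - l) * (norm (J w))\<^sup>2 + l * ((1 - 1/l2) * (norm (J w))\<^sup>2)"
    using q_lower_bound_from_ray[OF l2 w(1)] l by (intro add_left_mono mult_left_mono) auto
  also have "(1 - l) * (norm (J w))\<^sup>2 + l * ((1 - 1/l2) * (norm (J w))\<^sup>2) = (1 - l/l2) * (norm (J w))\<^sup>2"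
    by (simp add: algebra_simps)
  finally have ge: "q 0 (ray l) w \<ge> (1 - l/l2) * (norm (J w))\<^sup>2" .
  have "(norm w)\<^sup>2 > 0" using w by simp
  then have "(norm (J w))\<^sup>2 > 0" using J_ge[OF w(1)] by linarith
  moreover have "1 - l/l2 > 0" using l by (simp add: divide_less_eq)
  ultimately show ?thesis using ge by (smt (verit) mult_pos_pos)
qed

lemma ray_point_nearer_off_ball:
  assumes l2: "l2 \<in> ray_params" and l: "0 \<le> l" "l < l2" and \<rho>: "\<rho> > 0"
  shows "\<exists>\<delta>>0. \<forall>x m m'. dist (x, m) (t, \<mu>) < \<delta> \<longrightarrow> m' \<in> M - ball \<mu> \<rho> \<longrightarrow>
    norm (m - (m + l *\<^sub>R (x - m))) < norm (m' - (m + l *\<^sub>R (x - m)))"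
proof -
  define Y where "Y p = snd p + l *\<^sub>R (fst p - snd p)" for p :: "'a \<times> 'a"
  have "compact (M - ball \<mu> \<rho>)" using cM by (simp add: compact_diff)
  moreover have "continuous_on UNIV Y" unfolding Y_def by (intro continuous_intros)
  moreover have "continuous_on UNIV (\<lambda>p::'a \<times> 'a. snd p)" by (intro continuous_intros)
  moreover have "norm (snd (t, \<mu>) - Y (t, \<mu>)) < norm (m' - Y (t, \<mu>))" if "m' \<in> M - ball \<mu> \<rho>" for m'
  proof -
    have "m' \<noteq> \<mu>" using that \<rho> by auto
    moreover have "Y (t, \<mu>) = ray l" by (simp add: Y_def ray_def)
    ultimately show ?thesis using ray_strictly_nearer_below[OF l2 l, of m'] that by simp
  qed
  ultimately obtain \<delta> where "\<delta> > 0"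
    "\<And>p m'. dist p (t, \<mu>) < \<delta> \<Longrightarrow> m' \<in> M - ball \<mu> \<rho> \<Longrightarrow> norm (snd p - Y p) < norm (m' - Y p)"
    using strictly_nearer_persists[of "M - ball \<mu> \<rho>" Y "\<lambda>p. snd p" "(t, \<mu>)"] by blast
  then show ?thesis by (auto simp: Y_def)
qed

lemma dist_ray_point:
  assumes "l \<ge> 1"
  shows "dist (m + l *\<^sub>R (x - m)) (ray l) \<le> (l - 1) * dist m \<mu> + l * dist x t"
proof -
  have "m + l *\<^sub>R (x - m) - ray l = (1 - l) *\<^sub>R (m - \<mu>) + l *\<^sub>R (x - t)"
    by (simp add: ray_def algebra_simps)
  then show ?thesis
    using norm_triangle_ineq[of "(1 - l) *\<^sub>R (m - \<mu>)" "l *\<^sub>R (x - t)"] assms by (simp add: dist_norm)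
qed

lemma ray_extends_near:
  assumes uniq: "\<And>m. is_minimizer M t m \<Longrightarrow> m = \<mu>" and l2: "l2 \<in> ray_params" "l2 > 1"
  shows "\<exists>\<delta>>0. \<forall>x m. dist x t < \<delta> \<longrightarrow> is_minimizer M x m \<longrightarrow>
    is_minimizer M (m + ((1 + l2)/2) *\<^sub>R (x - m)) m"
proof -
  define l where "l = (1 + l2) / 2"
  have l: "1 < l" "l < l2" using l2 by (auto simp: l_def)
  obtain \<delta>1 where \<delta>1: "\<delta>1 > 0"
    "\<And>z y w. norm z < \<delta>1 \<Longrightarrow> dist y (ray l) < \<delta>1 \<Longrightarrow> w \<in> T \<Longrightarrow> q z y w \<ge> 0"
    using q_nonneg_near[of "ray l"] q_pos_below[OF l2(1) l] by blast
  obtain \<rho> where \<rho>: "\<rho> > 0" "\<rho> \<le> \<delta>1" "ball \<mu> \<rho> \<subseteq> U" using ball_in_U[OF \<delta>1(1)] .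
  obtain \<delta>2 where \<delta>2: "\<delta>2 > 0" "\<And>x m m'. dist (x, m) (t, \<mu>) < \<delta>2 \<Longrightarrow> m' \<in> M - ball \<mu> \<rho> \<Longrightarrow>
      norm (m - (m + l *\<^sub>R (x - m))) < norm (m' - (m + l *\<^sub>R (x - m)))"
    using ray_point_nearer_off_ball[OF l2(1) _ l(2) \<rho>(1)] l(1) by auto
  define \<sigma> where "\<sigma> = min \<rho> (min (\<delta>2 / 2) (\<delta>1 / (2 * l)))"
  have \<sigma>: "\<sigma> > 0" "\<sigma> \<le> \<rho>" "2 * \<sigma> \<le> \<delta>2" "2 * l * \<sigma> \<le> \<delta>1"
  proof -
    show "\<sigma> > 0" using \<rho> \<delta>1 \<delta>2 l by (simp add: \<sigma>_def)
    show "\<sigma> \<le> \<rho>" "2 * \<sigma> \<le> \<delta>2" by (simp_all add: \<sigma>_def)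
    have "\<sigma> \<le> \<delta>1 / (2 * l)" by (simp add: \<sigma>_def)
    then show "2 * l * \<sigma> \<le> \<delta>1" using l by (simp add: le_divide_eq mult.commute)
  qed
  obtain \<delta>3 where \<delta>3: "\<delta>3 > 0" "\<And>x m. dist x t < \<delta>3 \<Longrightarrow> is_minimizer M x m \<Longrightarrow> dist m \<mu> < \<sigma>"
    using minimizers_near[OF uniq \<sigma>(1)] by blast
  show ?thesis
  proof (intro exI[of _ "min \<sigma> \<delta>3"] conjI allI impI)
    show "min \<sigma> \<delta>3 > 0" using \<sigma> \<delta>3 by simp
    fix x m assume x: "dist x t < min \<sigma> \<delta>3" and xm: "is_minimizer M x m"
    define y where "y = m + l *\<^sub>R (x - m)"
    have mM: "m \<in> M" using xm by (simp add: is_minimizer_def)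
    have dm: "dist m \<mu> < \<sigma>" using \<delta>3(2)[OF _ xm] x by simp
    then have mU: "m \<in> U" using \<sigma> \<rho> by (auto simp: dist_commute)
    then obtain v where v: "v \<in> T" "m = \<phi> v" "norm v \<le> norm (m - \<mu>)"
      using chart_coordinate[OF mM] by blast
    have "dist y (ray l) \<le> (l - 1) * dist m \<mu> + l * dist x t"
      unfolding y_def using l by (intro dist_ray_point) simp
    also have "\<dots> < (l - 1) * \<sigma> + l * \<sigma>"
      using dm x l by (intro add_le_less_mono mult_left_mono mult_strict_left_mono) auto
    finally have dy: "dist y (ray l) < \<delta>1" using \<sigma> by (simp add: algebra_simps)
    have "dist (x, m) (t, \<mu>) \<le> dist x t + dist m \<mu>"
      unfolding dist_Pair_Pair by (rule sqrt_sum_squares_le_sum) auto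
    then have dp: "dist (x, m) (t, \<mu>) < \<delta>2" using x dm \<sigma> by simp
    have "(\<phi> v - y) \<bullet> (u + D [u] v) = 0" if "u \<in> T" for u
    proof -
      have "(\<phi> v - x) \<bullet> (u + D [u] v) = 0" using minimizer_critical[OF v(1) _ _ that] mU v(2) xm by simp
      moreover have "\<phi> v - y = l *\<^sub>R (\<phi> v - x)" using v(2) by (simp add: y_def algebra_simps)
      ultimately show ?thesis by simp
    qed
    moreover have "norm (\<phi> v - y) \<le> norm (m' - y)" if "m' \<in> M" "m' \<notin> ball \<mu> \<rho>" for m'
      using \<delta>2(2)[OF dp, of m'] that v(2) by (simp add: y_def)
    moreover have "norm v < \<delta>1" using v(3) dm \<sigma> \<rho> by (simp add: dist_norm)
    ultimately have "is_minimizer M y (\<phi> v)"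
      using minimizer_from_local_convexity[OF \<delta>1(2) \<rho>(2,3) dy v(1)] mM v(2) by blast
    then show "is_minimizer M (m + ((1 + l2) / 2) *\<^sub>R (x - m)) m" using v(2) by (simp add: y_def l_def)
  qed
qed

lemma linear_beta_left: "linear (\<lambda>v. \<beta> y v u)" unfolding linear_iff by (simp add: beta_add1 beta_scale1)
lemma linear_beta_right: "linear (\<lambda>u. \<beta> y v u)" unfolding linear_iff by (simp add: beta_add2 beta_scale2)
lemma linear_J: "linear J" unfolding linear_iff by (simp add: J_add J_scale)

subsection \<open>Differentiability of the nearest-point map\<close>

lemma critical_form_linearization:
  assumes e: "e > 0"
  shows "\<exists>d>0. \<forall>z u. norm z < d \<longrightarrow> u \<in> T \<longrightarrow> \<bar>(\<phi> z - t) \<bullet> (u + D [u] z) - \<beta> t z u\<bar> \<le> e * norm z * norm u"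
proof -
  define \<Phi> where "\<Phi> z = (\<Sum>i\<in>Basis. ((\<phi> z - t) \<bullet> (i + D [i] z)) *\<^sub>R i)" for z
  have dterm: "((\<lambda>z. (\<phi> z - t) \<bullet> (i + D [i] z)) has_derivative (\<lambda>v. \<beta> t v i)) (at 0)" for i
  proof -
    have "((\<lambda>z. (\<phi> z - t) \<bullet> (i + D [i] z)) has_derivative
        (\<lambda>v. (\<phi> 0 - t) \<bullet> D [v, i] 0 + (v + D [v] 0) \<bullet> (i + D [i] 0))) (at 0)"
    proof (rule has_derivative_inner)
      show "((\<lambda>z. \<phi> z - t) has_derivative (\<lambda>h. h + D [h] 0)) (at 0)"
        by (rule has_derivative_eq_rhs[OF has_derivative_diff[OF phi_has_derivative has_derivative_const]]) simp
      show "((\<lambda>z. i + D [i] z) has_derivative (\<lambda>v. D [v, i] 0)) (at 0)"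
        by (rule has_derivative_eq_rhs[OF has_derivative_add[OF has_derivative_const D1_has_derivative]]) simp
    qed
    then show ?thesis by (rule has_derivative_eq_rhs) (auto simp: \<beta>_def J_def \<phi>0 inner_commute)
  qed
  have dPhi: "(\<Phi> has_derivative (\<lambda>v. \<Sum>i\<in>Basis. \<beta> t v i *\<^sub>R i)) (at 0)"
    unfolding \<Phi>_def by (intro has_derivative_sum has_derivative_scaleR_left dterm)
  have Phi_u: "\<Phi> z \<bullet> u = (\<phi> z - t) \<bullet> (u + D [u] z)" for z u
  proof -
    have "u + D [u] z = (\<Sum>i\<in>Basis. (u \<bullet> i) *\<^sub>R (i + D [i] z))"
      by (subst D1_expand) (simp add: scaleR_add_right sum.distrib euclidean_representation)
    then have "(\<phi> z - t) \<bullet> (u + D [u] z) = (\<Sum>i\<in>Basis. (u \<bullet> i) * ((\<phi> z - t) \<bullet> (i + D [i] z)))"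
      by (simp add: inner_sum_right)
    moreover have "\<Phi> z \<bullet> u = (\<Sum>i\<in>Basis. (u \<bullet> i) * ((\<phi> z - t) \<bullet> (i + D [i] z)))"
      unfolding \<Phi>_def inner_sum_left inner_scaleR_left by (rule sum.cong) (auto simp: inner_commute)
    ultimately show ?thesis by simp
  qed
  have DPhi_u: "(\<Sum>i\<in>Basis. \<beta> t v i *\<^sub>R i) \<bullet> u = \<beta> t v u" for v u
  proof -
    have "\<beta> t v u = (\<Sum>i\<in>Basis. (u \<bullet> i) * \<beta> t v i)"
      using linear_basis_expansion[OF linear_beta_right[of t v], of u] by simp
    moreover have "(\<Sum>i\<in>Basis. \<beta> t v i *\<^sub>R i) \<bullet> u = (\<Sum>i\<in>Basis. (u \<bullet> i) * \<beta> t v i)"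
      unfolding inner_sum_left inner_scaleR_left by (rule sum.cong) (auto simp: inner_commute)
    ultimately show ?thesis by simp
  qed
  have Phi0: "\<Phi> 0 \<bullet> u = 0" if "u \<in> T" for u
    using minimizer_critical[of 0 t u] \<phi>0 \<mu>U tmin that subT Phi_u[of 0 u] by (simp add: subspace_0)
  obtain d where d: "d > 0" "\<And>z. norm (z - 0) < d \<Longrightarrow>
      norm (\<Phi> z - \<Phi> 0 - (\<Sum>i\<in>Basis. \<beta> t (z - 0) i *\<^sub>R i)) \<le> e * norm (z - 0)"
    using dPhi e unfolding has_derivative_at_alt by blast
  show ?thesis
  proof (intro exI[of _ d] conjI allI impI)
    fix z u :: 'a assume z: "norm z < d" and u: "u \<in> T"
    have "(\<phi> z - t) \<bullet> (u + D [u] z) - \<beta> t z u = (\<Phi> z - \<Phi> 0 - (\<Sum>i\<in>Basis. \<beta> t z i *\<^sub>R i)) \<bullet> u"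
      using Phi_u[of z u] DPhi_u[of z u] Phi0[OF u] by (simp add: inner_diff_left)
    also have "\<bar>\<dots>\<bar> \<le> norm (\<Phi> z - \<Phi> 0 - (\<Sum>i\<in>Basis. \<beta> t z i *\<^sub>R i)) * norm u"
      by (rule Cauchy_Schwarz_ineq2)
    also have "\<dots> \<le> e * norm z * norm u" using d(2)[of z] z by (simp add: mult_right_mono)
    finally show "\<bar>(\<phi> z - t) \<bullet> (u + D [u] z) - \<beta> t z u\<bar> \<le> e * norm z * norm u" .
  qed (use d in auto)
qed

lemma D1_near:
  assumes e: "e > 0"
  shows "\<exists>d>0. \<forall>v u. norm v < d \<longrightarrow> norm (D [u] v - D [u] 0) \<le> e * norm u"
proof -
  define f where "f v = (\<Sum>i\<in>Basis. norm (D [i] v - D [i] 0))" for v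
  have "isCont f 0" unfolding f_def by (intro continuous_intros)
  then have "(f \<longlongrightarrow> 0) (at 0)" by (simp add: isCont_def f_def)
  then have "\<forall>\<^sub>F v in at 0. f v < e" using e by (rule order_tendstoD)
  then obtain d where d: "d > 0" "\<And>v. v \<noteq> 0 \<Longrightarrow> dist v 0 < d \<Longrightarrow> f v < e"
    unfolding eventually_at by blast
  show ?thesis
  proof (intro exI[of _ d] conjI allI impI)
    fix v u :: 'a assume v: "norm v < d"
    have fv: "f v \<le> e" using d(2)[of v] v e by (cases "v = 0") (auto simp: f_def)
    have "D [u] v - D [u] 0 = (\<Sum>i\<in>Basis. (u \<bullet> i) *\<^sub>R (D [i] v - D [i] 0))"
      by (simp add: D1_expand[of u v] D1_expand[of u 0] scaleR_diff_right sum_subtractf)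
    then have "norm (D [u] v - D [u] 0) \<le> (\<Sum>i\<in>Basis. norm ((u \<bullet> i) *\<^sub>R (D [i] v - D [i] 0)))"
      by (simp only: norm_sum)
    also have "\<dots> \<le> (\<Sum>i\<in>Basis. norm u * norm (D [i] v - D [i] 0))"
      by (intro sum_mono) (simp add: Basis_le_norm mult_right_mono)
    also have "\<dots> = norm u * f v" by (simp add: f_def sum_distrib_left)
    also have "\<dots> \<le> norm u * e" using fv by (simp add: mult_left_mono)
    finally show "norm (D [u] v - D [u] 0) \<le> e * norm u" by (simp add: mult.commute)
  qed (use d in auto)
qed

lemma solution_operator:
  assumes \<kappa>: "\<kappa> > 0" and coercive: "\<And>w. w \<in> T \<Longrightarrow> \<kappa> * (norm (J w))\<^sup>2 \<le> \<beta> t w w"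
  obtains V where "linear V" "\<And>h. V h \<in> T" "\<And>h u. u \<in> T \<Longrightarrow> \<beta> t (V h) u = h \<bullet> J u"
    "onorm (\<lambda>h. J (V h)) \<le> 1 / \<kappa>"
proof -
  have "\<beta> t w w > 0" if "w \<in> T" "w \<noteq> 0" for w
  proof -
    have "(norm w)\<^sup>2 > 0" using that by simp
    then have "(norm (J w))\<^sup>2 > 0" using J_ge[OF that(1)] by linarith
    then show ?thesis using coercive[OF that(1)] \<kappa> by (smt (verit) mult_pos_pos)
  qed
  then obtain V where V: "linear V" "\<And>h. V h \<in> T" "\<And>h u. u \<in> T \<Longrightarrow> \<beta> t (V h) u = h \<bullet> J u"
    using positive_form_solution_operator[OF subT linear_beta_left linear_beta_right _ linear_J] by blast
  moreover have "onorm (\<lambda>h. J (V h)) \<le> 1 / \<kappa>"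
  proof (rule onorm_le)
    fix h
    have "\<kappa> * (norm (J (V h)))\<^sup>2 \<le> h \<bullet> J (V h)" using coercive[OF V(2)] V(3)[OF V(2)] by simp
    also have "\<dots> \<le> norm h * norm (J (V h))" by (rule order_trans[OF abs_ge_self Cauchy_Schwarz_ineq2])
    finally have "(\<kappa> * norm (J (V h))) * norm (J (V h)) \<le> norm h * norm (J (V h))"
      by (simp add: power2_eq_square mult.assoc)
    then have "\<kappa> * norm (J (V h)) \<le> norm h"
      by (cases "norm (J (V h)) = 0") (auto simp: mult_le_cancel_right \<kappa>)
    then show "norm (J (V h)) \<le> 1 / \<kappa> * norm h" using \<kappa> by (simp add: field_simps)
  qed
  ultimately show ?thesis by (rule that)
qed

text \<open>The chart coordinate \<open>v\<close> of a critical point for \<open>x\<close> is \<open>V (x - t)\<close> up to an error of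
  order \<open>\<eta> |x - t|\<close>: testing the critical equation against \<open>w = v - V (x - t)\<close> gives
  \<open>\<kappa> |w|\<^sup>2 \<le> \<beta> t w w \<le> \<eta> (|v| + |x - t|) |w|\<close>.\<close>
lemma chart_coordinate_estimate:
  assumes \<kappa>: "\<kappa> > 0" and coercive: "\<And>w. w \<in> T \<Longrightarrow> \<kappa> * (norm (J w))\<^sup>2 \<le> \<beta> t w w"
    and V: "\<And>h. V h \<in> T" "\<And>h u. u \<in> T \<Longrightarrow> \<beta> t (V h) u = h \<bullet> J u"
      "\<And>h. norm (V h) \<le> norm h * C" "C \<ge> 0"
    and \<eta>: "\<eta> > 0" "\<eta> \<le> \<kappa> / 2"
  shows "\<exists>\<sigma>>0. \<forall>x v. v \<in> T \<longrightarrow> norm v < \<sigma> \<longrightarrow> (\<forall>u\<in>T. (\<phi> v - x) \<bullet> (u + D [u] v) = 0) \<longrightarrow>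
    \<kappa> * norm (v - V (x - t)) \<le> 2 * \<eta> * (C + 1) * norm (x - t)"
proof -
  obtain d2 where d2: "d2 > 0" "\<And>z u. norm z < d2 \<Longrightarrow> u \<in> T \<Longrightarrow>
      \<bar>(\<phi> z - t) \<bullet> (u + D [u] z) - \<beta> t z u\<bar> \<le> \<eta> * norm z * norm u"
    using critical_form_linearization[OF \<eta>(1)] by blast
  obtain d3 where d3: "d3 > 0" "\<And>v u. norm v < d3 \<Longrightarrow> norm (D [u] v - D [u] 0) \<le> \<eta> * norm u"
    using D1_near[OF \<eta>(1)] by blast
  show ?thesis
  proof (intro exI[of _ "min d2 d3"] conjI allI impI)
    show "min d2 d3 > 0" using d2 d3 by simp
    fix x v assume v: "v \<in> T" "norm v < min d2 d3" and crit: "\<forall>u\<in>T. (\<phi> v - x) \<bullet> (u + D [u] v) = 0"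
    define h where "h = x - t"
    define w where "w = v - V h"
    have wT: "w \<in> T" using v(1) V(1) subT by (simp add: w_def subspace_diff)
    have "\<beta> t w w = \<beta> t v w - h \<bullet> J w"
      unfolding w_def using linear_diff[OF linear_beta_left[of t w], of v "V h"] V(2)[OF wT] by (simp add: w_def)
    also have "\<dots> = - ((\<phi> v - t) \<bullet> (w + D [w] v) - \<beta> t v w) + h \<bullet> (D [w] v - D [w] 0)"
    proof -
      have "(\<phi> v - t) \<bullet> (w + D [w] v) = h \<bullet> (w + D [w] v)"
        using crit wT by (simp add: h_def inner_diff_left algebra_simps)
      then show ?thesis unfolding J_def by (simp add: inner_diff_right inner_add_right)
    qed
    also have "\<dots> \<le> \<eta> * norm v * norm w + norm h * (\<eta> * norm w)"
    proof -
      have "h \<bullet> (D [w] v - D [w] 0) \<le> norm h * norm (D [w] v - D [w] 0)"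
        by (rule order_trans[OF abs_ge_self Cauchy_Schwarz_ineq2])
      also have "\<dots> \<le> norm h * (\<eta> * norm w)" using d3(2)[of v w] v by (simp add: mult_left_mono)
      finally show ?thesis using d2(2)[OF _ wT, of v] v by linarith
    qed
    finally have "\<beta> t w w \<le> \<eta> * (norm v + norm h) * norm w" by (simp add: algebra_simps)
    moreover have "\<kappa> * (norm w)\<^sup>2 \<le> \<beta> t w w"
      using J_ge[OF wT] coercive[OF wT] \<kappa> by (smt (verit) mult_left_mono)
    moreover have "norm v \<le> C * norm h + norm w"
      using norm_triangle_ineq[of "V h" w] V(3)[of h] by (simp add: w_def mult.commute)
    ultimately show "\<kappa> * norm (v - V (x - t)) \<le> 2 * \<eta> * (C + 1) * norm (x - t)"
      using absorb_into_left[OF \<kappa> \<eta>(2,1) _ _ V(4), of "norm w" "norm h" "norm v"]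
      by (simp add: w_def h_def)
  qed
qed

lemma nearest_eqI:
  assumes "is_minimizer M x m" "\<And>m'. is_minimizer M x m' \<Longrightarrow> m' = m"
  shows "nearest M x = m"
  unfolding nearest_def using assms by (rule the_equality)

lemma nearest_in_chart:
  assumes uniq: "\<And>x m m'. dist x t < \<delta> \<Longrightarrow> is_minimizer M x m \<Longrightarrow> is_minimizer M x m' \<Longrightarrow> m' = m"
    and \<delta>: "\<delta> > 0" and \<sigma>: "\<sigma> > 0"
  shows "\<exists>d>0. \<forall>x. norm (x - t) < d \<longrightarrow> (\<exists>v\<in>T. norm v < \<sigma> \<and> nearest M x = \<phi> v \<and>
    (\<forall>u\<in>T. (\<phi> v - x) \<bullet> (u + D [u] v) = 0))"
proof -
  have uniq_t: "\<And>m. is_minimizer M t m \<Longrightarrow> m = \<mu>" using uniq[OF _ tmin] \<delta> by simp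
  obtain \<rho> where \<rho>: "\<rho> > 0" "\<rho> \<le> \<sigma>" "ball \<mu> \<rho> \<subseteq> U" using ball_in_U[OF \<sigma>] .
  obtain d where d: "d > 0" "\<And>x m. dist x t < d \<Longrightarrow> is_minimizer M x m \<Longrightarrow> dist m \<mu> < \<rho>"
    using minimizers_near[OF uniq_t \<rho>(1)] by blast
  show ?thesis
  proof (intro exI[of _ "min \<delta> d"] conjI allI impI)
    show "min \<delta> d > 0" using \<delta> d by simp
    fix x assume x: "norm (x - t) < min \<delta> d"
    obtain m where xm: "is_minimizer M x m" using exists_minimizer[OF cM] \<mu>M by blast
    have mM: "m \<in> M" using xm by (simp add: is_minimizer_def)
    have "dist m \<mu> < \<rho>" using d(2)[OF _ xm] x by (simp add: dist_norm)
    then have mU: "m \<in> U" using \<rho> by (auto simp: dist_commute)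
    then obtain v where v: "v \<in> T" "m = \<phi> v" "norm v \<le> norm (m - \<mu>)"
      using chart_coordinate[OF mM] by blast
    have "norm v < \<sigma>" using v(3) \<open>dist m \<mu> < \<rho>\<close> \<rho> by (simp add: dist_norm)
    moreover have "nearest M x = \<phi> v"
      using nearest_eqI[OF xm] uniq[OF _ xm] x v(2) by (simp add: dist_norm)
    moreover have "\<forall>u\<in>T. (\<phi> v - x) \<bullet> (u + D [u] v) = 0"
      using minimizer_critical[OF v(1)] mU xm v(2) by simp
    ultimately show "\<exists>v\<in>T. norm v < \<sigma> \<and> nearest M x = \<phi> v \<and> (\<forall>u\<in>T. (\<phi> v - x) \<bullet> (u + D [u] v) = 0)"
      using v(1) by blast
  qed
qed

lemma nearest_chart_estimate:
  assumes uniq: "\<And>x m m'. dist x t < \<delta> \<Longrightarrow> is_minimizer M x m \<Longrightarrow> is_minimizer M x m' \<Longrightarrow> m' = m"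
    and \<delta>: "\<delta> > 0"
    and \<kappa>: "\<kappa> > 0" and coercive: "\<And>w. w \<in> T \<Longrightarrow> \<kappa> * (norm (J w))\<^sup>2 \<le> \<beta> t w w"
    and V: "\<And>h. V h \<in> T" "\<And>h u. u \<in> T \<Longrightarrow> \<beta> t (V h) u = h \<bullet> J u"
      "\<And>h. norm (V h) \<le> norm h * C" "C \<ge> 0"
    and \<eta>: "\<eta> > 0" "\<eta> \<le> \<kappa> / 2"
  shows "\<exists>d>0. \<forall>x. norm (x - t) < d \<longrightarrow> (\<exists>v\<in>T. nearest M x = \<phi> v \<and>
    norm (\<phi> v - \<phi> 0 - (v + D [v] 0)) \<le> \<eta> * norm v \<and>
    \<kappa> * norm (v - V (x - t)) \<le> 2 * \<eta> * (C + 1) * norm (x - t))"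
proof -
  obtain d1 where d1: "d1 > 0"
    "\<And>v. norm (v - 0) < d1 \<Longrightarrow> norm (\<phi> v - \<phi> 0 - ((v - 0) + D [v - 0] 0)) \<le> \<eta> * norm (v - 0)"
    using phi_has_derivative[of 0] \<eta>(1) unfolding has_derivative_at_alt by blast
  have "\<exists>\<sigma>>0. \<forall>x v. v \<in> T \<longrightarrow> norm v < \<sigma> \<longrightarrow> (\<forall>u\<in>T. (\<phi> v - x) \<bullet> (u + D [u] v) = 0) \<longrightarrow>
      \<kappa> * norm (v - V (x - t)) \<le> 2 * \<eta> * (C + 1) * norm (x - t)"
    by (rule chart_coordinate_estimate) (use \<kappa> coercive V \<eta> in auto)
  then obtain \<sigma> where \<sigma>: "\<sigma> > 0" "\<And>x v. v \<in> T \<Longrightarrow> norm v < \<sigma> \<Longrightarrow>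
      (\<forall>u\<in>T. (\<phi> v - x) \<bullet> (u + D [u] v) = 0) \<Longrightarrow>
      \<kappa> * norm (v - V (x - t)) \<le> 2 * \<eta> * (C + 1) * norm (x - t)"
    by blast
  have "min d1 \<sigma> > 0" using d1(1) \<sigma>(1) by simp
  with uniq \<delta> have "\<exists>d>0. \<forall>x. norm (x - t) < d \<longrightarrow> (\<exists>v\<in>T. norm v < min d1 \<sigma> \<and>
      nearest M x = \<phi> v \<and> (\<forall>u\<in>T. (\<phi> v - x) \<bullet> (u + D [u] v) = 0))"
    by (rule nearest_in_chart)
  then obtain d where d: "d > 0" "\<And>x. norm (x - t) < d \<Longrightarrow> \<exists>v\<in>T. norm v < min d1 \<sigma> \<and>
      nearest M x = \<phi> v \<and> (\<forall>u\<in>T. (\<phi> v - x) \<bullet> (u + D [u] v) = 0)"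
    by blast
  show ?thesis
  proof (intro exI[of _ d] conjI allI impI)
    fix x assume "norm (x - t) < d"
    then obtain v where v: "v \<in> T" "norm v < min d1 \<sigma>" "nearest M x = \<phi> v"
      and crit: "\<forall>u\<in>T. (\<phi> v - x) \<bullet> (u + D [u] v) = 0" using d(2) by blast
    then show "\<exists>v\<in>T. nearest M x = \<phi> v \<and> norm (\<phi> v - \<phi> 0 - (v + D [v] 0)) \<le> \<eta> * norm v \<and>
        \<kappa> * norm (v - V (x - t)) \<le> 2 * \<eta> * (C + 1) * norm (x - t)"
      using d1(2)[of v] \<sigma>(2)[OF v(1) _ crit] by auto
  qed (rule d(1))
qed

lemma nearest_linearization_error:
  assumes CV: "CV > 0" "\<And>h. norm (V h) \<le> norm h * CV" and CJ: "CJ > 0" "\<And>h. norm (J h) \<le> norm h * CJ"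
    and \<kappa>: "\<kappa> > 0" and \<eta>: "\<eta> > 0" "\<eta> \<le> 1" and \<pi>t: "nearest M t = \<mu>"
    and v: "nearest M x = \<phi> v" "norm (\<phi> v - \<phi> 0 - (v + D [v] 0)) \<le> \<eta> * norm v"
      "\<kappa> * norm (v - V (x - t)) \<le> 2 * \<eta> * (CV + 1) * norm (x - t)"
  shows "norm (nearest M x - nearest M t - J (V (x - t)))
    \<le> (\<eta> * (CV + 2 * (CV + 1) / \<kappa> + CJ * (2 * (CV + 1) / \<kappa>))) * norm (x - t)"
proof -
  define C where "C = 2 * (CV + 1) / \<kappa>"
  define h where "h = x - t"
  define w where "w = v - V h"
  have C: "C > 0" using CV \<kappa> by (simp add: C_def add_pos_nonneg)
  have "norm w \<le> (2 * \<eta> * (CV + 1) * norm h) / \<kappa>"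
    using v(3) \<kappa> by (simp add: w_def h_def le_divide_eq mult.commute)
  also have "\<dots> = C * \<eta> * norm h" by (simp add: C_def)
  finally have wb: "norm w \<le> C * \<eta> * norm h" .
  have "(C * norm h) * \<eta> \<le> (C * norm h) * 1" using \<eta>(2) C by (intro mult_left_mono) auto
  then have "norm w \<le> C * norm h" using wb by (simp add: mult_ac)
  moreover have "norm v \<le> norm (V h) + norm w" using norm_triangle_ineq[of "V h" w] by (simp add: w_def)
  ultimately have vb: "norm v \<le> (CV + C) * norm h" using CV(2)[of h] by (simp add: algebra_simps)
  have "J w = (v + D [v] 0) - J (V h)" using linear_diff[OF linear_J, of v "V h"] by (simp add: w_def J_def)
  then have "nearest M x - nearest M t - J (V h) = (\<phi> v - \<phi> 0 - (v + D [v] 0)) + J w"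
    using v(1) \<pi>t \<phi>0 by simp
  then have "norm (nearest M x - nearest M t - J (V h)) \<le> \<eta> * norm v + CJ * norm w"
    using norm_triangle_ineq[of "\<phi> v - \<phi> 0 - (v + D [v] 0)" "J w"] v(2) CJ(2)[of w]
    by (simp add: mult.commute)
  also have "\<dots> \<le> \<eta> * ((CV + C) * norm h) + CJ * (C * \<eta> * norm h)"
    using vb wb \<eta>(1) CJ(1) by (intro add_mono mult_left_mono) auto
  also have "\<dots> = (\<eta> * (CV + C + CJ * C)) * norm h" by (simp add: algebra_simps)
  finally show ?thesis by (simp add: h_def C_def)
qed

lemma nearest_has_derivative:
  assumes uniq: "\<And>x m m'. dist x t < \<delta> \<Longrightarrow> is_minimizer M x m \<Longrightarrow> is_minimizer M x m' \<Longrightarrow> m' = m"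
    and \<delta>: "\<delta> > 0"
    and \<kappa>: "\<kappa> > 0" and coercive: "\<And>w. w \<in> T \<Longrightarrow> \<kappa> * (norm (J w))\<^sup>2 \<le> \<beta> t w w"
  shows "\<exists>L. (nearest M has_derivative L) (at t) \<and> onorm L \<le> 1 / \<kappa>"
proof -
  obtain V where V: "linear V" "\<And>h. V h \<in> T" "\<And>h u. u \<in> T \<Longrightarrow> \<beta> t (V h) u = h \<bullet> J u"
    and onL: "onorm (\<lambda>h. J (V h)) \<le> 1 / \<kappa>"
    using \<kappa> coercive by (rule solution_operator) auto
  obtain CV where CV: "CV > 0" "\<And>h. norm (V h) \<le> norm h * CV"
    using bounded_linear.pos_bounded[OF linear_conv_bounded_linear[THEN iffD1, OF V(1)]] by blast
  obtain CJ where CJ: "CJ > 0" "\<And>h. norm (J h) \<le> norm h * CJ"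
    using bounded_linear.pos_bounded[OF linear_conv_bounded_linear[THEN iffD1, OF linear_J]] by blast
  have \<pi>t: "nearest M t = \<mu>" using nearest_eqI[OF tmin] uniq[OF _ tmin] \<delta> by simp
  have "(nearest M has_derivative (\<lambda>h. J (V h))) (at t)"
    unfolding has_derivative_at_alt
  proof (intro conjI allI impI)
    show "bounded_linear (\<lambda>h. J (V h))"
      using linear_compose[OF V(1) linear_J] by (simp add: o_def linear_conv_bounded_linear)
    fix e :: real assume e: "e > 0"
    define K where "K = CV + 2 * (CV + 1) / \<kappa> + CJ * (2 * (CV + 1) / \<kappa>)"
    have C: "2 * (CV + 1) / \<kappa> > 0" using CV(1) \<kappa> by simp
    have "CJ * (2 * (CV + 1) / \<kappa>) > 0" using CJ(1) C by (rule mult_pos_pos)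
    then have K: "K > 0" unfolding K_def using CV(1) C by linarith
    define \<eta> where "\<eta> = min (min (\<kappa>/2) 1) (e / K)"
    have \<eta>: "\<eta> > 0" "\<eta> \<le> \<kappa>/2" "\<eta> \<le> 1" "\<eta> * K \<le> e"
    proof -
      show "\<eta> > 0" using \<kappa> e K by (simp add: \<eta>_def)
      show "\<eta> \<le> \<kappa>/2" "\<eta> \<le> 1" unfolding \<eta>_def by linarith+
      have "\<eta> \<le> e / K" by (simp add: \<eta>_def)
      then show "\<eta> * K \<le> e" using K by (simp add: le_divide_eq)
    qed
    have "\<exists>d>0. \<forall>x. norm (x - t) < d \<longrightarrow> (\<exists>v\<in>T. nearest M x = \<phi> v \<and>
        norm (\<phi> v - \<phi> 0 - (v + D [v] 0)) \<le> \<eta> * norm v \<and>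
        \<kappa> * norm (v - V (x - t)) \<le> 2 * \<eta> * (CV + 1) * norm (x - t))"
      using uniq \<delta> \<kappa> coercive V(2,3) CV(2) less_imp_le[OF CV(1)] \<eta>(1,2) by (rule nearest_chart_estimate)
    then obtain d where d: "d > 0" "\<And>x. norm (x - t) < d \<Longrightarrow> \<exists>v\<in>T. nearest M x = \<phi> v \<and>
        norm (\<phi> v - \<phi> 0 - (v + D [v] 0)) \<le> \<eta> * norm v \<and>
        \<kappa> * norm (v - V (x - t)) \<le> 2 * \<eta> * (CV + 1) * norm (x - t)"
      by blast
    show "\<exists>d>0. \<forall>x. norm (x - t) < d \<longrightarrow>
      norm (nearest M x - nearest M t - J (V (x - t))) \<le> e * norm (x - t)"
    proof (intro exI[of _ d] conjI allI impI)
      fix x assume "norm (x - t) < d"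
      then obtain v where v: "nearest M x = \<phi> v" "norm (\<phi> v - \<phi> 0 - (v + D [v] 0)) \<le> \<eta> * norm v"
        "\<kappa> * norm (v - V (x - t)) \<le> 2 * \<eta> * (CV + 1) * norm (x - t)" using d(2) by blast
      have "norm (nearest M x - nearest M t - J (V (x - t))) \<le> (\<eta> * K) * norm (x - t)"
        unfolding K_def by (rule nearest_linearization_error[OF CV CJ \<kappa> \<eta>(1,3) \<pi>t v])
      also have "\<dots> \<le> e * norm (x - t)" using \<eta>(4) by (simp add: mult_right_mono)
      finally show "norm (nearest M x - nearest M t - J (V (x - t))) \<le> e * norm (x - t)" .
    qed (rule d(1))
  qed
  then show ?thesis using onL by blast
qed

lemma ray_params_beyond_one:
  assumes "t \<notin> cutlocus M"
  obtains l where "l \<in> ray_params" "l > 1"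
proof (cases "bdd_above ray_params")
  case True
  then show ?thesis using ray_params_Sup_in_cutlocus[OF assms] that by blast
next
  case False
  then show ?thesis using ray_params_unbounded[OF False, of 2] that by simp
qed

lemma cutlocus_complement_nhd:
  assumes tnc: "t \<notin> cutlocus M"
  shows "\<exists>\<delta>>0. (\<forall>c\<in>cutlocus M. \<delta> \<le> dist t c) \<and>
    (\<forall>x m m'. dist x t < \<delta> \<longrightarrow> is_minimizer M x m \<longrightarrow> is_minimizer M x m' \<longrightarrow> m' = m)"
proof -
  have uniq: "\<And>m. is_minimizer M t m \<Longrightarrow> m = \<mu>" using tnc tmin unfolding cutlocus_def by blast
  obtain l2 where l2: "l2 \<in> ray_params" "l2 > 1" using ray_params_beyond_one[OF tnc] .
  obtain \<delta> where \<delta>: "\<delta> > 0" "\<And>x m. dist x t < \<delta> \<Longrightarrow> is_minimizer M x m \<Longrightarrow>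
      is_minimizer M (m + ((1 + l2)/2) *\<^sub>R (x - m)) m"
    using ray_extends_near[OF uniq l2] by blast
  have lgt: "(1 + l2) / 2 > 1" using l2 by simp
  show ?thesis
  proof (intro exI[of _ \<delta>] conjI ballI allI impI)
    show "\<delta> > 0" by (rule \<delta>(1))
    fix c assume c: "c \<in> cutlocus M"
    show "\<delta> \<le> dist t c"
    proof (rule ccontr)
      assume "\<not> \<delta> \<le> dist t c"
      then have dc: "dist c t < \<delta>" by (simp add: dist_commute)
      obtain m where cm: "is_minimizer M c m" using exists_minimizer[OF cM] \<mu>M by blast
      have "c \<notin> cutlocus M" by (rule not_cutlocus_if_ray_extends[OF cm \<delta>(2)[OF dc cm] lgt])
      then show False using c by simp
    qed
  next
    fix x m m' assume "dist x t < \<delta>" "is_minimizer M x m" "is_minimizer M x m'"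
    then show "m' = m" using minimizer_unique_if_ray_extends \<delta>(2) lgt by blast
  qed
qed

text \<open>The curvature constant: if the cutlocus is met along the ray at \<open>ray l1\<close>, then
  \<open>\<kappa> = 1 - 1/l1\<close> and \<open>1/\<kappa> = 1 + 1/(l1 - 1) \<le> 1 + d(t, M) / d(t, C)\<close> because
  \<open>d(t, C) \<le> |t - ray l1| = (l1 - 1) d(t, M)\<close>.\<close>
lemma coercivity_constant:
  assumes tnc: "t \<notin> cutlocus M" and \<delta>: "\<delta> > 0" "\<forall>c\<in>cutlocus M. \<delta> \<le> dist t c"
  shows "\<exists>\<kappa>>0. (\<forall>w\<in>T. \<kappa> * (norm (J w))\<^sup>2 \<le> \<beta> t w w) \<and>
    1 / \<kappa> \<le> infdist t M / infdist t (cutlocus M) + 1"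
proof (cases "bdd_above ray_params")
  case True
  obtain l1 where l1: "l1 \<in> ray_params" "l1 > 1" "ray l1 \<in> cutlocus M"
    using ray_params_Sup_in_cutlocus[OF tnc True] by blast
  define r where "r = norm (t - \<mu>)"
  have dist_l1: "dist t (ray l1) = (l1 - 1) * r"
  proof -
    have "t - ray l1 = (1 - l1) *\<^sub>R (t - \<mu>)" by (simp add: ray_def algebra_simps)
    then show ?thesis using l1(2) by (simp add: dist_norm r_def)
  qed
  define d where "d = infdist t (cutlocus M)"
  have "\<delta> \<le> d" unfolding d_def using infdist_geI[of "cutlocus M" \<delta> t] l1(3) \<delta> by blast
  moreover have "d \<le> (l1 - 1) * r" unfolding d_def using infdist_le[OF l1(3), of t] dist_l1 by simp
  ultimately have dpos: "d > 0" and "(l1 - 1) * r > 0" using \<delta> by linarith+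
  then have "r > 0" using l1(2) by (simp add: zero_less_mult_iff)
  have "1 / (l1 - 1) = r / ((l1 - 1) * r)" using \<open>r > 0\<close> l1(2) by simp
  also have "\<dots> \<le> r / d" using dpos \<open>d \<le> (l1 - 1) * r\<close> \<open>r > 0\<close> by (intro divide_left_mono) auto
  finally have "1 / (l1 - 1) \<le> r / d" .
  moreover have "1 / (1 - 1/l1) = 1 / (l1 - 1) + 1" using l1(2) by (simp add: field_simps)
  ultimately have "1 / (1 - 1/l1) \<le> infdist t M / infdist t (cutlocus M) + 1"
    using infdist_minimizer[OF tmin] by (simp add: d_def r_def)
  moreover have "1 - 1/l1 > 0" using l1(2) by simp
  moreover have "\<forall>w\<in>T. (1 - 1/l1) * (norm (J w))\<^sup>2 \<le> \<beta> t w w"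
    using q_lower_bound_from_ray[OF l1(1)] q0_beta by simp
  ultimately show ?thesis by blast
next
  case False
  have "\<forall>w\<in>T. 1 * (norm (J w))\<^sup>2 \<le> \<beta> t w w" using q_lower_bound_unbounded[OF False] q0_beta by simp
  moreover have "1 / 1 \<le> infdist t M / infdist t (cutlocus M) + 1"
    using infdist_nonneg[of t M] infdist_nonneg[of t "cutlocus M"] by simp
  ultimately show ?thesis using zero_less_one by blast
qed

lemma nearest_derivative_bound:
  assumes "t \<notin> cutlocus M"
  shows "\<exists>L. (nearest M has_derivative L) (at t) \<and> onorm L \<le> infdist t M / infdist t (cutlocus M) + 1"
proof -
  obtain \<delta> where \<delta>: "\<delta> > 0" "\<forall>c\<in>cutlocus M. \<delta> \<le> dist t c"
    and uniq: "\<And>x m m'. dist x t < \<delta> \<Longrightarrow> is_minimizer M x m \<Longrightarrow> is_minimizer M x m' \<Longrightarrow> m' = m"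
    using cutlocus_complement_nhd[OF assms] by blast
  obtain \<kappa> where \<kappa>: "\<kappa> > 0" "\<And>w. w \<in> T \<Longrightarrow> \<kappa> * (norm (J w))\<^sup>2 \<le> \<beta> t w w"
    and bound: "1 / \<kappa> \<le> infdist t M / infdist t (cutlocus M) + 1"
    using coercivity_constant[OF assms \<delta>] by blast
  have "\<exists>L. (nearest M has_derivative L) (at t) \<and> onorm L \<le> 1 / \<kappa>"
    using uniq \<delta>(1) \<kappa> by (rule nearest_has_derivative)
  then show ?thesis using bound by (meson order_trans)
qed

end

theorem lemma3p1:
  fixes M :: "'a::euclidean_space set" and t :: 'a
  assumes "compact M" and "M \<noteq> {}" and "smooth_submanifold M"
    and "t \<notin> cutlocus M"
  shows "nearest M differentiable (at t) \<and>
         onorm (frechet_derivative (nearest M) (at t))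
           \<le> infdist t M / infdist t (cutlocus M) + 1"
proof -
  obtain \<mu> where tmin: "is_minimizer M t \<mu>" using exists_minimizer[OF assms(1,2)] by blast
  then have "\<mu> \<in> M" by (simp add: is_minimizer_def)
  then obtain U T g where ch: "graph_chart M \<mu> U T g"
    using assms(3) unfolding smooth_submanifold_def by blast
  then obtain D where D: "\<forall>x\<in>UNIV. D [] x = g x"
    "\<forall>vs. \<forall>x\<in>UNIV. (D vs has_derivative (\<lambda>h. D (h # vs) x)) (at x)"
    unfolding graph_chart_def smooth_on_def by blast
  interpret nearest_chart M t \<mu> U T g D
    using assms(1) tmin ch D by unfold_locales auto
  obtain L where L: "(nearest M has_derivative L) (at t)"
    "onorm L \<le> infdist t M / infdist t (cutlocus M) + 1"
    using nearest_derivative_bound[OF assms(4)] by blast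
  have "frechet_derivative (nearest M) (at t) = L" using frechet_derivative_at[OF L(1)] by simp
  moreover have "nearest M differentiable (at t)" using L(1) by (rule differentiableI)
  ultimately show ?thesis using L(2) by simp
qed

end
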